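(* Let $\mathbb T^2=\mathbb R^2/\mathbb Z^2$ carry the flat metric $g$ and area form $\sigma=dx\wedge dy$, and let $\alpha$ be a closed 1-form on $\mathbb T^2$. Let $\omega_\alpha$ be the 2-cocycle on $\mathfrak X_\sigma(\mathbb T^2)$ defined by $\omega_\alpha(H_f,H_h)=\int_{\mathbb T^2}f\,\alpha(H_h)\sigma$ for Hamiltonian vector fields $H_f,H_h$ with Hamiltonian functions $f,h$ of zero integral, and $\omega_\alpha(\partial_x,\partial_y)=\omega_\alpha(\partial_x,H_f)=\omega_\alpha(\partial_y,H_f)=0$. Consider the central extension $\mathbb R\times_{\omega_\alpha}\mathfrak X_\sigma(\mathbb T^2)$ (bracket $[(a,X),(b,Y)]=(\omega_\alpha(X,Y),[X,Y]_{\mathfrak g})$) with scalar product $ab+\int g(X,Y)\sigma$. Then a curve $(a,u)$ with $a=1$ satisfies the Euler equation if and only if there is a time dependent function $p$ with $$\partial_t u=-\nabla_uu-\psi_u\,\alpha^\sharp-\operatorname{grad}p,$$ where $\psi_u$ is the unique function with $d\psi_u=i_u\sigma-\langle i_u\sigma\rangle$ and $\int_{\mathbb T^2}\psi_u\sigma=0$.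
   Context: $\mathfrak X_\sigma(\mathbb T^2)$ is the Lie algebra of symplectic (= divergence free) vector fields with bracket $[X,Y]_{\mathfrak g}$ the negative of the usual vector field bracket. For a 1-form $a\,dx+b\,dy$ on $\mathbb T^2$, its average is $\langle a\,dx+b\,dy\rangle=(\int a\sigma)dx+(\int b\sigma)dy$. $\alpha^\sharp$ is the vector field metrically dual to $\alpha$, $\nabla$ the Levi-Civita connection. The Euler equation in a Lie algebra with scalar product is $\dot w=-\operatorname{ad}(w)^\top w$. *)

theory Defs
  imports "HOL-Analysis.Analysis"
begin

definition Dir :: "'a::real_normed_vector \<Rightarrow> ('a \<Rightarrow> real) \<Rightarrow> 'a \<Rightarrow> real" where
  "Dir v f x = frechet_derivative f (at x) v"

fun pd :: "'a::real_normed_vector list \<Rightarrow> ('a \<Rightarrow> real) \<Rightarrow> 'a \<Rightarrow> real" where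
  "pd [] f = f"
| "pd (v # vs) f = Dir v (pd vs f)"

definition smooth :: "('a::real_normed_vector \<Rightarrow> real) \<Rightarrow> bool" where
  "smooth f \<longleftrightarrow> (\<forall>vs x. pd vs f differentiable (at x))"

type_synonym pt = "real \<times> real"

definition periodic :: "(pt \<Rightarrow> 'b) \<Rightarrow> bool" where
  "periodic f \<longleftrightarrow> (\<forall>x y. f (x + 1, y) = f (x, y) \<and> f (x, y + 1) = f (x, y))"

(* smooth functions on T^2, viewed as Z^2-periodic smooth functions on R^2 *)
definition tfun :: "(pt \<Rightarrow> real) \<Rightarrow> bool" where
  "tfun f \<longleftrightarrow> smooth f \<and> periodic f"

definition Dx :: "(pt \<Rightarrow> real) \<Rightarrow> pt \<Rightarrow> real" where
  "Dx f = Dir (1, 0) f"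

definition Dy :: "(pt \<Rightarrow> real) \<Rightarrow> pt \<Rightarrow> real" where
  "Dy f = Dir (0, 1) f"

(* integral against sigma = dx /\ dy over T^2 (fundamental domain [0,1]^2, total area 1) *)
definition tint :: "(pt \<Rightarrow> real) \<Rightarrow> real" where
  "tint f = integral (cbox (0, 0) (1, 1)) f"

(* vector fields X = X1 d/dx + X2 d/dy, represented by (X1, X2) *)
definition vf :: "(pt \<Rightarrow> pt) \<Rightarrow> bool" where
  "vf X \<longleftrightarrow> tfun (\<lambda>z. fst (X z)) \<and> tfun (\<lambda>z. snd (X z))"

definition divg :: "(pt \<Rightarrow> pt) \<Rightarrow> pt \<Rightarrow> real" where
  "divg X z = Dx (\<lambda>w. fst (X w)) z + Dy (\<lambda>w. snd (X w)) z"

(* X_sigma(T^2): symplectic = divergence free smooth vector fields *)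
definition Xsigma :: "(pt \<Rightarrow> pt) set" where
  "Xsigma = {X. vf X \<and> (\<forall>z. divg X z = 0)}"

definition act :: "(pt \<Rightarrow> pt) \<Rightarrow> (pt \<Rightarrow> real) \<Rightarrow> pt \<Rightarrow> real" where
  "act X f z = fst (X z) * Dx f z + snd (X z) * Dy f z"

definition vf_bracket :: "(pt \<Rightarrow> pt) \<Rightarrow> (pt \<Rightarrow> pt) \<Rightarrow> pt \<Rightarrow> pt" where
  "vf_bracket X Y z =
     (act X (\<lambda>w. fst (Y w)) z - act Y (\<lambda>w. fst (X w)) z,
      act X (\<lambda>w. snd (Y w)) z - act Y (\<lambda>w. snd (X w)) z)"

definition lie_bracket :: "(pt \<Rightarrow> pt) \<Rightarrow> (pt \<Rightarrow> pt) \<Rightarrow> pt \<Rightarrow> pt" where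
  "lie_bracket X Y z = - vf_bracket X Y z"

(* Levi-Civita connection of the flat metric: nabla_X Y *)
definition nabla :: "(pt \<Rightarrow> pt) \<Rightarrow> (pt \<Rightarrow> pt) \<Rightarrow> pt \<Rightarrow> pt" where
  "nabla X Y z = (act X (\<lambda>w. fst (Y w)) z, act X (\<lambda>w. snd (Y w)) z)"

(* 1-forms a dx + b dy, represented by (a, b) *)
definition closed_form :: "(pt \<Rightarrow> pt) \<Rightarrow> bool" where
  "closed_form \<alpha> \<longleftrightarrow> vf \<alpha> \<and> (\<forall>z. Dy (\<lambda>w. fst (\<alpha> w)) z = Dx (\<lambda>w. snd (\<alpha> w)) z)"

definition eval1 :: "(pt \<Rightarrow> pt) \<Rightarrow> (pt \<Rightarrow> pt) \<Rightarrow> pt \<Rightarrow> real" where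
  "eval1 \<alpha> X z = fst (\<alpha> z) * fst (X z) + snd (\<alpha> z) * snd (X z)"

(* metric dual for the flat metric g = dx^2 + dy^2 *)
definition sharp :: "(pt \<Rightarrow> pt) \<Rightarrow> pt \<Rightarrow> pt" where
  "sharp \<alpha> z = \<alpha> z"

definition dfun :: "(pt \<Rightarrow> real) \<Rightarrow> pt \<Rightarrow> pt" where
  "dfun f z = (Dx f z, Dy f z)"

definition grad :: "(pt \<Rightarrow> real) \<Rightarrow> pt \<Rightarrow> pt" where
  "grad f = sharp (dfun f)"

(* i_X sigma = X1 dy - X2 dx *)
definition isigma :: "(pt \<Rightarrow> pt) \<Rightarrow> pt \<Rightarrow> pt" where
  "isigma X z = (- snd (X z), fst (X z))"

definition avg1 :: "(pt \<Rightarrow> pt) \<Rightarrow> pt \<Rightarrow> pt" where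
  "avg1 \<beta> z = (tint (\<lambda>w. fst (\<beta> w)), tint (\<lambda>w. snd (\<beta> w)))"

definition psi :: "(pt \<Rightarrow> pt) \<Rightarrow> pt \<Rightarrow> real" where
  "psi X = (THE \<psi>. tfun \<psi> \<and> (\<forall>z. dfun \<psi> z = isigma X z - avg1 (isigma X) z) \<and> tint \<psi> = 0)"

(* Hamiltonian vector field, convention i_{H_f} sigma = df *)
definition ham :: "(pt \<Rightarrow> real) \<Rightarrow> pt \<Rightarrow> pt" where
  "ham f z = (Dy f z, - Dx f z)"

definition ham_part :: "(pt \<Rightarrow> pt) \<Rightarrow> pt \<Rightarrow> real" where
  "ham_part X = (THE f. tfun f \<and> tint f = 0 \<and> (\<exists>c. \<forall>z. X z = c + ham f z))"

definition omega :: "(pt \<Rightarrow> pt) \<Rightarrow> (pt \<Rightarrow> pt) \<Rightarrow> (pt \<Rightarrow> pt) \<Rightarrow> real" where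
  "omega \<alpha> X Y = tint (\<lambda>z. ham_part X z * eval1 \<alpha> (ham (ham_part Y)) z)"

definition is_2cocycle :: "((pt \<Rightarrow> pt) \<Rightarrow> (pt \<Rightarrow> pt) \<Rightarrow> real) \<Rightarrow> bool" where
  "is_2cocycle \<omega> \<longleftrightarrow>
     (\<forall>X\<in>Xsigma. \<forall>Y\<in>Xsigma. \<omega> X Y = - \<omega> Y X) \<and>
     (\<forall>X\<in>Xsigma. \<forall>Y\<in>Xsigma. \<forall>Z\<in>Xsigma.
        \<omega> (lie_bracket X Y) Z + \<omega> (lie_bracket Y Z) X + \<omega> (lie_bracket Z X) Y = 0)"

type_synonym ext = "real \<times> (pt \<Rightarrow> pt)"

definition ext_alg :: "ext set" where
  "ext_alg = UNIV \<times> Xsigma"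

definition ext_bracket :: "(pt \<Rightarrow> pt) \<Rightarrow> ext \<Rightarrow> ext \<Rightarrow> ext" where
  "ext_bracket \<alpha> w v = (omega \<alpha> (snd w) (snd v), lie_bracket (snd w) (snd v))"

definition ext_inner :: "ext \<Rightarrow> ext \<Rightarrow> real" where
  "ext_inner w v = fst w * fst v + tint (\<lambda>z. snd w z \<bullet> snd v z)"

definition ext_neg :: "ext \<Rightarrow> ext" where
  "ext_neg w = (- fst w, \<lambda>z. - snd w z)"

definition ad_transpose_app :: "(pt \<Rightarrow> pt) \<Rightarrow> ext \<Rightarrow> ext \<Rightarrow> bool" where
  "ad_transpose_app \<alpha> w z \<longleftrightarrow>
     z \<in> ext_alg \<and> (\<forall>v\<in>ext_alg. ext_inner z v = ext_inner w (ext_bracket \<alpha> w v))"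

definition dt :: "(real \<Rightarrow> pt \<Rightarrow> pt) \<Rightarrow> real \<Rightarrow> pt \<Rightarrow> pt" where
  "dt u t z = (deriv (\<lambda>s. fst (u s z)) t, deriv (\<lambda>s. snd (u s z)) t)"

definition smooth_curve :: "(real \<Rightarrow> pt \<Rightarrow> pt) \<Rightarrow> bool" where
  "smooth_curve u \<longleftrightarrow> (\<forall>t. u t \<in> Xsigma) \<and>
     smooth (\<lambda>(t, z). fst (u t z)) \<and> smooth (\<lambda>(t, z). snd (u t z))"

definition euler_eq :: "(pt \<Rightarrow> pt) \<Rightarrow> (real \<Rightarrow> real) \<Rightarrow> (real \<Rightarrow> pt \<Rightarrow> pt) \<Rightarrow> bool" where
  "euler_eq \<alpha> a u \<longleftrightarrow>
     (\<forall>t. \<exists>z. ad_transpose_app \<alpha> (a t, u t) z \<and> (deriv a t, dt u t) = ext_neg z)"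

end

theory Submission
  imports Defs
begin

text \<open>
  The Euler equation for \<open>w = (1, u)\<close> says that \<open>-\<partial>\<^sub>t u\<close> is the divergence free field \<open>X\<close> with
  \<open>\<langle>X, V\<rangle> = \<omega>\<^sub>\<alpha>(u, V) + \<langle>u, [u, V]\<rangle>\<close> for all divergence free \<open>V\<close>, where \<open>\<langle>_, _\<rangle>\<close> is the
  \<open>L\<^sup>2\<close> product. Divergence free fields are anti-self-adjoint, whence \<open>\<langle>u, [u, V]\<rangle> = \<langle>\<nabla>\<^sub>u u, V\<rangle>\<close>.
  Applied to a constant field \<open>c\<close> and two Hamiltonian fields, the cocycle identity says that
  \<open>L\<^sub>c \<alpha>\<close> pairs to zero with all pairs of Hamiltonian fields; testing with Fourier modes gives
  \<open>L\<^sub>c \<alpha> = 0\<close>, so the cocycle hypothesis forces \<open>\<alpha>\<close> to be constant, and then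
  \<open>\<omega>\<^sub>\<alpha>(u, V) = \<langle>\<psi>\<^sub>u \<alpha>\<^sup>\<sharp>, V\<rangle>\<close>. Hence \<open>-\<partial>\<^sub>t u - \<nabla>\<^sub>u u - \<psi>\<^sub>u \<alpha>\<^sup>\<sharp>\<close> is orthogonal to all divergence
  free fields, and by the Hodge decomposition of the torus, which rests on a Poincare lemma for
  periodic curl free fields, it is a gradient. The converse follows from the same identities.
\<close>

lemma Dir_eq: "(f has_derivative f') (at x) \<Longrightarrow> Dir v f x = f' v"
  unfolding Dir_def using frechet_derivative_at by metis

lemma has_derivative_Dir: "f differentiable (at x) \<Longrightarrow> (f has_derivative (\<lambda>v. Dir v f x)) (at x)"
  unfolding Dir_def using frechet_derivative_works by blast

lemma Dir_add_direction: "f differentiable (at x) \<Longrightarrow> Dir (v + w) f x = Dir v f x + Dir w f x"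
  using linear_add[OF has_derivative_linear[OF has_derivative_Dir]] by blast

lemma Dir_scaleR_direction: "f differentiable (at x) \<Longrightarrow> Dir (c *\<^sub>R v) f x = c * Dir v f x"
  using linear_scale[OF has_derivative_linear[OF has_derivative_Dir]] by simp

lemma Dir_add:
  "f differentiable (at x) \<Longrightarrow> g differentiable (at x) \<Longrightarrow>
   Dir v (\<lambda>x. f x + g x) x = Dir v f x + Dir v g x"
  by (rule Dir_eq[OF has_derivative_add[OF has_derivative_Dir has_derivative_Dir], simplified])

lemma Dir_diff:
  "f differentiable (at x) \<Longrightarrow> g differentiable (at x) \<Longrightarrow>
   Dir v (\<lambda>x. f x - g x) x = Dir v f x - Dir v g x"
  by (rule Dir_eq[OF has_derivative_diff[OF has_derivative_Dir has_derivative_Dir], simplified])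

lemma Dir_mult:
  "f differentiable (at x) \<Longrightarrow> g differentiable (at x) \<Longrightarrow>
   Dir v (\<lambda>x. f x * g x) x = Dir v f x * g x + f x * Dir v g x"
  using Dir_eq[OF has_derivative_mult[OF has_derivative_Dir has_derivative_Dir], of f x g v]
  by (simp add: algebra_simps)

lemma Dir_const: "Dir v (\<lambda>x. c) x = 0"
  by (rule Dir_eq[OF has_derivative_const, simplified])

lemma Dir_cmult: "f differentiable (at x) \<Longrightarrow> Dir v (\<lambda>x. c * f x) x = c * Dir v f x"
  by (rule Dir_eq[OF has_derivative_mult_right[OF has_derivative_Dir], simplified])

lemma Dir_shift:
  assumes "f differentiable (at (z + e))"
  shows "Dir v (\<lambda>w. f (w + e)) z = Dir v f (z + e)"
proof -
  have "((\<lambda>w. w + e) has_derivative (\<lambda>h. h)) (at z)" by (auto intro!: derivative_eq_intros)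
  from Dir_eq[OF has_derivative_compose[OF this has_derivative_Dir[OF assms]]] show ?thesis by simp
qed

text \<open>Finite-order smoothness makes \<open>smooth\<close> accessible to induction on the order.\<close>

definition smooth_upto :: "nat \<Rightarrow> ('a::real_normed_vector \<Rightarrow> real) \<Rightarrow> bool" where
  "smooth_upto n f \<longleftrightarrow> (\<forall>vs x. length vs \<le> n \<longrightarrow> pd vs f differentiable (at x))"

lemma pd_snoc: "pd (vs @ [v]) f = pd vs (Dir v f)"
  by (induction vs) auto

lemma smooth_upto_0: "smooth_upto 0 f \<longleftrightarrow> (\<forall>x. f differentiable (at x))"
  unfolding smooth_upto_def by auto

lemma smooth_upto_Suc:
  "smooth_upto (Suc n) f \<longleftrightarrow> (\<forall>x. f differentiable (at x)) \<and> (\<forall>v. smooth_upto n (Dir v f))"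
proof
  assume f: "smooth_upto (Suc n) f"
  show "(\<forall>x. f differentiable (at x)) \<and> (\<forall>v. smooth_upto n (Dir v f))"
    using f[unfolded smooth_upto_def, rule_format, of "[]"]
      f[unfolded smooth_upto_def, rule_format, of "_ @ [_]"]
    by (auto simp: smooth_upto_def pd_snoc)
next
  assume f: "(\<forall>x. f differentiable (at x)) \<and> (\<forall>v. smooth_upto n (Dir v f))"
  show "smooth_upto (Suc n) f" unfolding smooth_upto_def
  proof (intro allI impI)
    fix vs :: "'a list" and x assume "length vs \<le> Suc n"
    then show "pd vs f differentiable (at x)"
      using f by (cases vs rule: rev_exhaust) (auto simp: smooth_upto_def pd_snoc)
  qed
qed

lemma smooth_iff_smooth_upto: "smooth f \<longleftrightarrow> (\<forall>n. smooth_upto n f)"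
  unfolding smooth_def smooth_upto_def by auto

lemma smooth_iff_Dir: "smooth f \<longleftrightarrow> (\<forall>x. f differentiable (at x)) \<and> (\<forall>v. smooth (Dir v f))"
proof
  show "smooth f \<Longrightarrow> (\<forall>x. f differentiable (at x)) \<and> (\<forall>v. smooth (Dir v f))"
    unfolding smooth_iff_smooth_upto using smooth_upto_Suc by blast
  assume f: "(\<forall>x. f differentiable (at x)) \<and> (\<forall>v. smooth (Dir v f))"
  show "smooth f" unfolding smooth_iff_smooth_upto
  proof
    fix n show "smooth_upto n f"
      using f by (cases n) (auto simp: smooth_upto_0 smooth_upto_Suc smooth_iff_smooth_upto)
  qed
qed

lemma smooth_imp_differentiable: "smooth f \<Longrightarrow> f differentiable (at x)"
  using smooth_iff_Dir by blast

lemma smooth_Dir: "smooth f \<Longrightarrow> smooth (Dir v f)"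
  using smooth_iff_Dir by blast

lemma smooth_imp_continuous_on: "smooth f \<Longrightarrow> continuous_on S f"
  using smooth_imp_differentiable differentiable_imp_continuous_within
  by (blast intro: continuous_at_imp_continuous_on)

lemma smooth_upto_const: "smooth_upto n (\<lambda>x. c)"
  by (induction n arbitrary: c) (simp_all add: smooth_upto_0 smooth_upto_Suc Dir_const[abs_def])

lemma smooth_upto_add: "smooth_upto n f \<Longrightarrow> smooth_upto n g \<Longrightarrow> smooth_upto n (\<lambda>x. f x + g x)"
proof (induction n arbitrary: f g)
  case (Suc n)
  then have "\<And>x. f differentiable (at x)" "\<And>x. g differentiable (at x)"
    by (auto simp: smooth_upto_Suc)
  then have "Dir v (\<lambda>x. f x + g x) = (\<lambda>x. Dir v f x + Dir v g x)" for v
    by (auto simp: Dir_add)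
  with Suc show ?case by (auto simp: smooth_upto_Suc)
qed (auto simp: smooth_upto_0)

lemma smooth_upto_mono: "smooth_upto (Suc n) f \<Longrightarrow> smooth_upto n f"
  unfolding smooth_upto_def by auto

lemma smooth_upto_mult: "smooth_upto n f \<Longrightarrow> smooth_upto n g \<Longrightarrow> smooth_upto n (\<lambda>x. f x * g x)"
proof (induction n arbitrary: f g)
  case (Suc n)
  then have "\<And>x. f differentiable (at x)" "\<And>x. g differentiable (at x)"
    by (auto simp: smooth_upto_Suc)
  then have "Dir v (\<lambda>x. f x * g x) = (\<lambda>x. Dir v f x * g x + f x * Dir v g x)" for v
    by (auto simp: Dir_mult)
  moreover have "smooth_upto n (\<lambda>x. Dir v f x * g x + f x * Dir v g x)" for v
    using Suc by (intro smooth_upto_add Suc.IH) (auto simp: smooth_upto_Suc intro: smooth_upto_mono)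
  ultimately show ?case using Suc.prems by (auto simp: smooth_upto_Suc)
qed (auto simp: smooth_upto_0)

lemma smooth_const [simp]: "smooth (\<lambda>x. c)"
  using smooth_upto_const smooth_iff_smooth_upto by blast

lemma smooth_add: "smooth f \<Longrightarrow> smooth g \<Longrightarrow> smooth (\<lambda>x. f x + g x)"
  using smooth_upto_add smooth_iff_smooth_upto by blast

lemma smooth_mult: "smooth f \<Longrightarrow> smooth g \<Longrightarrow> smooth (\<lambda>x. f x * g x)"
  using smooth_upto_mult smooth_iff_smooth_upto by blast

lemma smooth_cmult: "smooth f \<Longrightarrow> smooth (\<lambda>x. c * f x)"
  using smooth_mult[OF smooth_const] by blast

lemma smooth_uminus: "smooth f \<Longrightarrow> smooth (\<lambda>x. - f x)"
  using smooth_cmult[of f "-1"] by simp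

lemma smooth_diff: "smooth f \<Longrightarrow> smooth g \<Longrightarrow> smooth (\<lambda>x. f x - g x)"
  using smooth_add[OF _ smooth_uminus] by fastforce

lemmas smooth_intros = smooth_const smooth_add smooth_mult smooth_cmult smooth_uminus smooth_diff smooth_Dir

lemma smooth_sin:
  assumes "bounded_linear l"
  shows "smooth (\<lambda>x. c * sin (l x + p))"
proof -
  have "smooth_upto n (\<lambda>x. c * sin (l x + p))" for n
  proof (induction n arbitrary: c p)
    case 0
    then show ?case unfolding smooth_upto_0 differentiable_def
      by (auto intro!: derivative_eq_intros bounded_linear_imp_has_derivative assms)
  next
    case (Suc n)
    have d: "((\<lambda>x. c * sin (l x + p)) has_derivative (\<lambda>v. (c * l v) * sin (l x + (p + pi/2)))) (at x)" for x
      by (auto intro!: derivative_eq_intros bounded_linear_imp_has_derivative assms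
          simp: sin_add[of _ "pi/2"] add.assoc[symmetric])
    then have "Dir v (\<lambda>x. c * sin (l x + p)) = (\<lambda>x. (c * l v) * sin (l x + (p + pi/2)))" for v
      using Dir_eq by fastforce
    with d Suc.IH show ?case unfolding smooth_upto_Suc differentiable_def by auto
  qed
  then show ?thesis using smooth_iff_smooth_upto by blast
qed

lemma has_real_derivative_line:
  assumes "g differentiable (at (y + s *\<^sub>R v))"
  shows "((\<lambda>s. g (y + s *\<^sub>R v)) has_real_derivative Dir v g (y + s *\<^sub>R v)) (at s within S)"
proof -
  have "((\<lambda>s. y + s *\<^sub>R v) has_derivative (\<lambda>h. h *\<^sub>R v)) (at s within S)"
    by (auto intro!: derivative_eq_intros)
  from has_derivative_compose[OF this has_derivative_Dir[OF assms]]
  have "((\<lambda>s. g (y + s *\<^sub>R v)) has_derivative (\<lambda>h. Dir (h *\<^sub>R v) g (y + s *\<^sub>R v))) (at s within S)" .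
  moreover have "(\<lambda>h. Dir (h *\<^sub>R v) g (y + s *\<^sub>R v)) = (*) (Dir v g (y + s *\<^sub>R v))"
    using Dir_scaleR_direction[OF assms] by (auto simp: mult.commute)
  ultimately show ?thesis unfolding has_field_derivative_def by simp
qed

lemma has_integral_Dir_line:
  assumes "\<And>z. g differentiable (at z)" and "a \<le> b"
  shows "((\<lambda>s. Dir v g (y + s *\<^sub>R v)) has_integral (g (y + b *\<^sub>R v) - g (y + a *\<^sub>R v))) {a..b}"
proof (rule fundamental_theorem_of_calculus[OF assms(2)])
  fix s assume "s \<in> {a..b}"
  show "((\<lambda>s. g (y + s *\<^sub>R v)) has_vector_derivative Dir v g (y + s *\<^sub>R v)) (at s within {a..b})"
    using has_real_derivative_line[OF assms(1)] unfolding has_real_derivative_iff_has_vector_derivative .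
qed

lemma integral_Dir_line:
  assumes "\<And>z. g differentiable (at z)" and "a \<le> b"
  shows "integral {a..b} (\<lambda>s. Dir v g (y + s *\<^sub>R v)) = g (y + b *\<^sub>R v) - g (y + a *\<^sub>R v)"
  using has_integral_Dir_line[OF assms] by blast

section \<open>Symmetry of second derivatives\<close>

lemma integral_mixed_Dir_rectangle:
  assumes f: "smooth f" and "0 \<le> S" "0 \<le> T"
  shows "integral {0..S} (\<lambda>s. integral {0..T} (\<lambda>t. Dir w (Dir v f) (x + s *\<^sub>R v + t *\<^sub>R w))) =
         f (x + S *\<^sub>R v + T *\<^sub>R w) - f (x + S *\<^sub>R v) - f (x + T *\<^sub>R w) + f x"
proof -
  have df: "\<And>z. f differentiable (at z)" and dv: "\<And>z. Dir v f differentiable (at z)"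
    using f by (auto intro: smooth_imp_differentiable smooth_Dir)
  have "integral {0..T} (\<lambda>t. Dir w (Dir v f) ((x + s *\<^sub>R v) + t *\<^sub>R w)) =
        Dir v f ((x + T *\<^sub>R w) + s *\<^sub>R v) - Dir v f (x + s *\<^sub>R v)" for s
    using integral_Dir_line[OF dv \<open>0 \<le> T\<close>, of w "x + s *\<^sub>R v"]
    by (simp add: algebra_simps)
  then have "integral {0..S} (\<lambda>s. integral {0..T} (\<lambda>t. Dir w (Dir v f) (x + s *\<^sub>R v + t *\<^sub>R w))) =
        integral {0..S} (\<lambda>s. Dir v f ((x + T *\<^sub>R w) + s *\<^sub>R v) - Dir v f (x + s *\<^sub>R v))"
    by simp
  also have "\<dots> = (f ((x + T *\<^sub>R w) + S *\<^sub>R v) - f (x + T *\<^sub>R w)) - (f (x + S *\<^sub>R v) - f x)"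
    using has_integral_diff[OF has_integral_Dir_line[OF df \<open>0 \<le> S\<close>, of v "x + T *\<^sub>R w"]
        has_integral_Dir_line[OF df \<open>0 \<le> S\<close>, of v x]]
    by (simp add: integral_unique)
  finally show ?thesis by (simp add: algebra_simps)
qed

lemma zero_at_origin_if_square_integrals_zero:
  fixes D :: "real \<times> real \<Rightarrow> real"
  assumes cont: "continuous_on UNIV D" and int: "\<And>S. 0 < S \<Longrightarrow> (D has_integral 0) (cbox (0,0) (S,S))"
  shows "D (0,0) = 0"
proof (rule ccontr)
  assume nz: "D (0,0) \<noteq> 0"
  define E where "E p = D p * D (0,0)" for p
  have cE: "continuous_on S E" for S
    unfolding E_def using cont by (intro continuous_intros) (auto intro: continuous_on_subset)
  have E0: "E (0,0) > 0" unfolding E_def using nz not_real_square_gt_zero by blast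
  have "isCont E (0,0)"
    using cE[of UNIV] continuous_on_eq_continuous_at by blast
  then obtain d where "d > 0" and d: "\<And>p. dist p (0,0) < d \<Longrightarrow> \<bar>E p - E (0,0)\<bar> < E (0,0)"
    using E0 unfolding continuous_at_eps_delta dist_real_def by blast
  define S where "S = d / 3"
  have "S > 0" using \<open>d > 0\<close> unfolding S_def by simp
  have nonneg: "0 \<le> E p" if "p \<in> box (0,0) (S,S)" for p
  proof -
    obtain s t where p: "p = (s,t)" by (cases p)
    with that have "0 < s" "s < S" "0 < t" "t < S" by (auto simp: mem_box Basis_prod_def)
    then have "norm (s,t) < d" using norm_Pair_le[of s t] unfolding S_def by simp
    then show ?thesis using d[of p] p by (simp add: dist_norm)
  qed
  have "(E has_integral 0) (cbox (0,0) (S,S))"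
    using has_integral_mult_left[OF int[OF \<open>S > 0\<close>]] unfolding E_def by simp
  moreover have "(S/2, S/2) \<in> box (0, 0) (S, S)" and "(0::real,0::real) \<in> cbox (0,0) (S,S)"
    using \<open>S > 0\<close> by (auto simp: mem_box Basis_prod_def)
  ultimately have "E (0,0) = 0"
    using has_integral_0_cbox_imp_0[OF cE nonneg] by blast
  with E0 show False by simp
qed

text \<open>Both mixed derivatives integrate over each square \<open>[0, S]\<^sup>2\<close> to the same second difference of
  \<open>f\<close> (Fubini), so their continuous difference vanishes at the corner.\<close>

theorem Dir_Dir_commute:
  fixes f :: "'a::real_normed_vector \<Rightarrow> real"
  assumes f: "smooth f"
  shows "Dir v (Dir w f) x = Dir w (Dir v f) x"
proof -
  define A where "A p = Dir v (Dir w f) (x + fst p *\<^sub>R v + snd p *\<^sub>R w)" for p :: "real \<times> real"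
  define B where "B p = Dir w (Dir v f) (x + fst p *\<^sub>R v + snd p *\<^sub>R w)" for p :: "real \<times> real"
  have cont: "continuous_on S (\<lambda>p. g (x + fst p *\<^sub>R v + snd p *\<^sub>R w))" if "smooth g" for g S
    by (rule continuous_on_compose2[OF smooth_imp_continuous_on[OF that] _ subset_UNIV])
      (intro continuous_intros)
  have cA: "continuous_on S A" and cB: "continuous_on S B" for S
    unfolding A_def B_def using f by (auto intro!: cont smooth_Dir)
  have "integral (cbox (0,0) (S,S)) A = integral (cbox (0,0) (S,S)) B" if "0 < S" for S
  proof -
    have swap: "x + t *\<^sub>R v + s *\<^sub>R w = x + s *\<^sub>R w + t *\<^sub>R v" for s t
      by (simp add: algebra_simps)
    have "integral (cbox (0,0) (S,S)) A = integral {0..S} (\<lambda>s. integral {0..S} (\<lambda>t. A (s,t)))"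
      using integral_prod_continuous[OF cA] by (simp add: cbox_interval)
    also have "\<dots> = integral {0..S} (\<lambda>t. integral {0..S} (\<lambda>s. A (s,t)))"
      by (rule integral_swap_continuous[where f="\<lambda>s t. A (s,t)", unfolded cbox_interval])
        (simp add: case_prod_beta' cA)
    also have "\<dots> = f (x + S *\<^sub>R w + S *\<^sub>R v) - f (x + S *\<^sub>R w) - f (x + S *\<^sub>R v) + f x"
      unfolding A_def fst_conv snd_conv swap
      by (rule integral_mixed_Dir_rectangle[OF f]) (use that in auto)
    also have "\<dots> = integral {0..S} (\<lambda>s. integral {0..S} (\<lambda>t. B (s,t)))"
      unfolding B_def fst_conv snd_conv
      by (subst integral_mixed_Dir_rectangle[OF f]) (use that in \<open>auto simp: algebra_simps\<close>)
    also have "\<dots> = integral (cbox (0,0) (S,S)) B"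
      using integral_prod_continuous[OF cB] by (simp add: cbox_interval)
    finally show ?thesis .
  qed
  then have "((\<lambda>p. A p - B p) has_integral 0) (cbox (0,0) (S,S))" if "0 < S" for S
    using has_integral_diff[OF integrable_integral integrable_integral,
        OF integrable_continuous integrable_continuous, OF cA cB, of "(0,0)" "(S,S)"] that
    by simp
  moreover have "continuous_on UNIV (\<lambda>p. A p - B p)"
    using cA cB by (rule continuous_on_diff)
  ultimately have "A (0,0) - B (0,0) = 0"
    by (rule zero_at_origin_if_square_integrals_zero[rotated])
  then show ?thesis by (simp add: A_def B_def)
qed

lemma Dir_eq_Dx_Dy: "f differentiable (at z) \<Longrightarrow> Dir v f z = fst v * Dx f z + snd v * Dy f z"
proof -
  assume d: "f differentiable (at z)"
  have "Dir v f z = Dir (fst v *\<^sub>R (1,0) + snd v *\<^sub>R (0,1)) f z" by (cases v) simp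
  also have "\<dots> = fst v * Dx f z + snd v * Dy f z"
    by (simp only: Dir_add_direction[OF d] Dir_scaleR_direction[OF d] Dx_def Dy_def)
  finally show ?thesis .
qed

lemma smooth_Dx: "smooth f \<Longrightarrow> smooth (Dx f)" and smooth_Dy: "smooth f \<Longrightarrow> smooth (Dy f)"
  unfolding Dx_def Dy_def by (simp_all add: smooth_Dir)

lemma Dx_Dy_commute: "smooth f \<Longrightarrow> Dx (Dy f) z = Dy (Dx f) z"
  unfolding Dx_def Dy_def by (rule Dir_Dir_commute)

lemma
  assumes "smooth f" "smooth g"
  shows Dx_add: "Dx (\<lambda>z. f z + g z) z = Dx f z + Dx g z"
    and Dy_add: "Dy (\<lambda>z. f z + g z) z = Dy f z + Dy g z"
    and Dx_mult: "Dx (\<lambda>z. f z * g z) z = Dx f z * g z + f z * Dx g z"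
    and Dy_mult: "Dy (\<lambda>z. f z * g z) z = Dy f z * g z + f z * Dy g z"
  unfolding Dx_def Dy_def using assms by (auto intro!: Dir_add Dir_mult smooth_imp_differentiable)

lemma
  assumes "smooth f"
  shows Dx_cmult: "Dx (\<lambda>z. c * f z) z = c * Dx f z"
    and Dy_cmult: "Dy (\<lambda>z. c * f z) z = c * Dy f z"
  unfolding Dx_def Dy_def using assms by (auto intro!: Dir_cmult smooth_imp_differentiable)

lemma Dx_const [simp]: "Dx (\<lambda>z. c) z = 0" and Dy_const [simp]: "Dy (\<lambda>z. c) z = 0"
  unfolding Dx_def Dy_def by (rule Dir_const)+

lemma
  assumes "smooth f"
  shows Dx_uminus: "Dx (\<lambda>z. - f z) z = - Dx f z"
    and Dy_uminus: "Dy (\<lambda>z. - f z) z = - Dy f z"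
  using Dx_cmult[OF assms, of "-1"] Dy_cmult[OF assms, of "-1"] by simp_all

lemma
  assumes "smooth f" "smooth g"
  shows Dx_diff: "Dx (\<lambda>z. f z - g z) z = Dx f z - Dx g z"
    and Dy_diff: "Dy (\<lambda>z. f z - g z) z = Dy f z - Dy g z"
  using Dx_add[OF assms(1) smooth_uminus[OF assms(2)]] Dy_add[OF assms(1) smooth_uminus[OF assms(2)]]
    Dx_uminus[OF assms(2)] Dy_uminus[OF assms(2)] by simp_all

lemma tfun_smooth: "tfun f \<Longrightarrow> smooth f"
  and tfun_periodic: "tfun f \<Longrightarrow> periodic f"
  unfolding tfun_def by blast+

lemma periodic_iff_shift:
  "periodic f \<longleftrightarrow> (\<forall>w. f (w + (1,0)) = f w) \<and> (\<forall>w. f (w + (0,1)) = f w)"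
  unfolding periodic_def by auto

lemma Dir_periodic_shift:
  assumes "smooth f" "\<And>w. f (w + e) = f w"
  shows "Dir v f (z + e) = Dir v f z"
  using Dir_shift[where v=v and z=z and e=e, OF smooth_imp_differentiable[OF assms(1)]] assms(2)
  by simp

lemma periodic_Dir: "smooth f \<Longrightarrow> periodic f \<Longrightarrow> periodic (Dir v f)"
  unfolding periodic_iff_shift using Dir_periodic_shift by blast

lemma tfun_const [simp]: "tfun (\<lambda>z. c)"
  unfolding tfun_def periodic_def by simp

lemma tfun_add: "tfun f \<Longrightarrow> tfun g \<Longrightarrow> tfun (\<lambda>z. f z + g z)"
  and tfun_mult: "tfun f \<Longrightarrow> tfun g \<Longrightarrow> tfun (\<lambda>z. f z * g z)"
  unfolding tfun_def periodic_def by (simp_all add: smooth_add smooth_mult)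

lemma tfun_cmult: "tfun f \<Longrightarrow> tfun (\<lambda>z. c * f z)"
  using tfun_mult[OF tfun_const] by blast

lemma tfun_uminus: "tfun f \<Longrightarrow> tfun (\<lambda>z. - f z)"
  using tfun_cmult[of f "-1"] by simp

lemma tfun_diff: "tfun f \<Longrightarrow> tfun g \<Longrightarrow> tfun (\<lambda>z. f z - g z)"
  using tfun_add[OF _ tfun_uminus] by fastforce

lemma tfun_Dir: "tfun f \<Longrightarrow> tfun (Dir v f)"
  unfolding tfun_def using smooth_Dir periodic_Dir by blast

lemma tfun_Dx: "tfun f \<Longrightarrow> tfun (Dx f)" and tfun_Dy: "tfun f \<Longrightarrow> tfun (Dy f)"
  unfolding Dx_def Dy_def by (simp_all add: tfun_Dir)

lemmas tfun_intros = tfun_const tfun_add tfun_mult tfun_cmult tfun_uminus tfun_diff tfun_Dir tfun_Dx tfun_Dy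

lemma periodic_nat_shift:
  assumes "periodic f"
  shows "f (x + real n, y) = f (x, y)" "f (x, y + real n) = f (x, y)"
proof -
  show "f (x + real n, y) = f (x, y)"
  proof (induction n arbitrary: x)
    case (Suc n) then show ?case using assms unfolding periodic_def
      by (metis add.commute add.left_commute of_nat_Suc)
  qed simp
  show "f (x, y + real n) = f (x, y)"
  proof (induction n arbitrary: y)
    case (Suc n) then show ?case using assms unfolding periodic_def
      by (metis add.commute add.left_commute of_nat_Suc)
  qed simp
qed

lemma periodic_int_shift:
  assumes "periodic f"
  shows "f (x + of_int n, y) = f (x, y) \<and> f (x, y + of_int n) = f (x, y)"
proof (cases n rule: int_cases)
  case (nonneg k)
  then show ?thesis using periodic_nat_shift[OF assms] by simp
next
  case (neg k)
  then have ex: "x + of_int n + real (Suc k) = x" and ey: "y + of_int n + real (Suc k) = y" by simp_all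
  have "f (x + of_int n + real (Suc k), y) = f (x + of_int n, y)"
    and "f (x, y + of_int n + real (Suc k)) = f (x, y + of_int n)"
    by (rule periodic_nat_shift[OF assms])+
  then show ?thesis unfolding ex ey by simp
qed

lemma periodic_eq_zero_if_zero_on_unit_square:
  assumes "periodic f" and "\<And>z. z \<in> cbox (0,0) (1,1) \<Longrightarrow> f z = 0"
  shows "f z = 0"
proof -
  obtain x y where z: "z = (x, y)" by (cases z)
  define x' where "x' = x - of_int \<lfloor>x\<rfloor>"
  define y' where "y' = y - of_int \<lfloor>y\<rfloor>"
  have "0 \<le> x'" "x' \<le> 1" "0 \<le> y'" "y' \<le> 1"
    unfolding x'_def y'_def using floor_correct[of x] floor_correct[of y] by linarith+
  then have "(x', y') \<in> cbox (0, 0) (1, 1)" by simp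
  moreover have "f z = f (x', y')"
    using periodic_int_shift[OF assms(1), where x=x' and n="\<lfloor>x\<rfloor>" and y=y]
      periodic_int_shift[OF assms(1), where x=x' and n="\<lfloor>y\<rfloor>" and y=y'] z unfolding x'_def y'_def by simp
  ultimately show ?thesis using assms(2) by simp
qed

lemma tint_integrable: "smooth f \<Longrightarrow> f integrable_on cbox (0,0) (1,1)"
  using integrable_continuous[OF smooth_imp_continuous_on] by blast

lemma
  assumes "smooth f" "smooth g"
  shows tint_add: "tint (\<lambda>z. f z + g z) = tint f + tint g"
    and tint_diff: "tint (\<lambda>z. f z - g z) = tint f - tint g"
  unfolding tint_def using assms by (simp_all add: integral_add integral_diff tint_integrable)

lemma tint_cmult: "tint (\<lambda>z. c * f z) = c * tint f"
  and tint_uminus: "tint (\<lambda>z. - f z) = - tint f"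
  and tint_const [simp]: "tint (\<lambda>z. c) = c"
  unfolding tint_def by (simp_all add: content_Pair)

lemma tint_iterated_y_x:
  "smooth W \<Longrightarrow> tint W = integral {0..1} (\<lambda>x. integral {0..1} (\<lambda>y. W (x,y)))"
  unfolding tint_def using integral_prod_continuous[OF smooth_imp_continuous_on, of W 0 0 1 1]
  by (simp add: cbox_interval)

lemma tint_iterated_x_y:
  assumes "smooth W"
  shows "tint W = integral {0..1} (\<lambda>y. integral {0..1} (\<lambda>x. W (x,y)))"
  unfolding tint_iterated_y_x[OF assms]
  by (rule integral_swap_continuous[where f="\<lambda>x y. W (x,y)", unfolded cbox_interval])
    (simp add: smooth_imp_continuous_on[OF assms])

lemma
  assumes "tfun F"
  shows tint_Dx_zero: "tint (Dx F) = 0"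
    and tint_Dy_zero: "tint (Dy F) = 0"
proof -
  have dF: "\<And>z. F differentiable (at z)" using assms tfun_smooth smooth_imp_differentiable by blast
  have "integral {0..1} (\<lambda>x. Dx F (x,y)) = F (1,y) - F (0,y)" for y
    using integral_Dir_line[OF dF, of 0 1 "(1,0)" "(0,y)"] unfolding Dx_def by simp
  moreover have "integral {0..1} (\<lambda>y. Dy F (x,y)) = F (x,1) - F (x,0)" for x
    using integral_Dir_line[OF dF, of 0 1 "(0,1)" "(x,0)"] unfolding Dy_def by simp
  moreover have "F (1,y) = F (0,y)" "F (x,1) = F (x,0)" for x y
    using tfun_periodic[OF assms] unfolding periodic_def by (metis add_0)+
  ultimately show "tint (Dx F) = 0" "tint (Dy F) = 0"
    using tint_iterated_x_y[of "Dx F"] tint_iterated_y_x[of "Dy F"] assms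
    by (simp_all add: smooth_Dx smooth_Dy tfun_smooth)
qed

lemma tint_Dir_zero:
  assumes "tfun F"
  shows "tint (Dir v F) = 0"
proof -
  have "Dir v F = (\<lambda>z. fst v * Dx F z + snd v * Dy F z)"
    using Dir_eq_Dx_Dy assms tfun_smooth smooth_imp_differentiable by blast
  then show ?thesis
    using assms tint_Dx_zero tint_Dy_zero
    by (simp add: tint_add tint_cmult smooth_cmult smooth_Dx smooth_Dy tfun_smooth)
qed

lemma tint_Dir_mult:
  assumes "tfun f" "tfun g"
  shows "tint (\<lambda>z. Dir v f z * g z) = - tint (\<lambda>z. f z * Dir v g z)"
proof -
  have sf: "smooth f" and sg: "smooth g" using assms tfun_smooth by blast+
  have "0 = tint (Dir v (\<lambda>z. f z * g z))" using tint_Dir_zero[OF tfun_mult[OF assms]] by simp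
  also have "Dir v (\<lambda>z. f z * g z) = (\<lambda>z. Dir v f z * g z + f z * Dir v g z)"
    using Dir_mult sf sg smooth_imp_differentiable by blast
  also have "tint \<dots> = tint (\<lambda>z. Dir v f z * g z) + tint (\<lambda>z. f z * Dir v g z)"
    by (intro tint_add smooth_intros sf sg)
  finally show ?thesis by linarith
qed

lemma tint_Dx_mult: "tfun f \<Longrightarrow> tfun g \<Longrightarrow> tint (\<lambda>z. Dx f z * g z) = - tint (\<lambda>z. f z * Dx g z)"
  and tint_Dy_mult: "tfun f \<Longrightarrow> tfun g \<Longrightarrow> tint (\<lambda>z. Dy f z * g z) = - tint (\<lambda>z. f z * Dy g z)"
  unfolding Dx_def Dy_def by (simp_all add: tint_Dir_mult)

lemma tint_square_eq_zero_imp_zero: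
  assumes k: "tfun k" and "tint (\<lambda>z. k z * k z) = 0"
  shows "k z = 0"
proof (rule periodic_eq_zero_if_zero_on_unit_square[OF tfun_periodic[OF k]])
  fix w :: pt assume w: "w \<in> cbox (0,0) (1,1)"
  have kk: "smooth (\<lambda>z. k z * k z)" using k by (intro smooth_mult tfun_smooth)
  have "((\<lambda>z. k z * k z) has_integral 0) (cbox (0,0) (1,1))"
    using integrable_integral[OF tint_integrable[OF kk]] assms(2) unfolding tint_def by simp
  moreover have "(1/2::real, 1/2::real) \<in> box (0, 0) (1, 1)" by (simp add: mem_box Basis_prod_def)
  ultimately have "k w * k w = 0"
    using has_integral_0_cbox_imp_0[OF smooth_imp_continuous_on[OF kk], of "(0,0)" "(1,1)"] w
    by (metis emptyE zero_le_square)
  then show "k w = 0" by simp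
qed

lemma tfun_eq_tint_if_Dx_Dy_zero:
  assumes t: "tfun f" and "\<And>z. Dx f z = 0" "\<And>z. Dy f z = 0"
  shows "f z = tint f"
proof -
  have s: "smooth f" using t tfun_smooth by blast
  have "(f has_derivative (\<lambda>h. 0)) (at x within UNIV)" for x
    using has_derivative_Dir[OF smooth_imp_differentiable[OF s], of x] assms(2,3)
    by (simp add: Dir_eq_Dx_Dy[OF smooth_imp_differentiable[OF s]])
  from has_derivative_zero_constant[of UNIV, OF _ this] obtain c where "\<And>x. f x = c" by auto
  then have "f = (\<lambda>x. c)" by auto
  then show ?thesis by simp
qed

lemma tfun_eqI:
  assumes tf: "tfun f" and tg: "tfun g" and "tint f = tint g"
    and dx: "\<And>z. Dx f z - Dx g z = k1" and dy: "\<And>z. Dy f z - Dy g z = k2"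
  shows "f = g"
proof -
  have sf: "smooth f" and sg: "smooth g" using tf tg tfun_smooth by blast+
  define d where "d z = f z - g z" for z
  have td: "tfun d" unfolding d_def[abs_def] by (rule tfun_diff[OF tf tg])
  have Dxd: "Dx d = (\<lambda>z. k1)" and Dyd: "Dy d = (\<lambda>z. k2)"
    unfolding d_def[abs_def] using Dx_diff[OF sf sg] Dy_diff[OF sf sg] dx dy by auto
  \<comment> \<open>a constant derivative of a periodic function has mean zero, hence vanishes\<close>
  have "k1 = 0" "k2 = 0" using tint_Dx_zero[OF td] tint_Dy_zero[OF td] unfolding Dxd Dyd by simp_all
  moreover have "tint d = 0" unfolding d_def[abs_def] using tint_diff[OF sf sg] assms(3) by simp
  ultimately have "d z = 0" for z using tfun_eq_tint_if_Dx_Dy_zero[OF td] Dxd Dyd by simp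
  then show ?thesis unfolding d_def by auto
qed

section \<open>The Poincare lemma on the torus\<close>

lemma has_derivative_comp_scaleR:
  assumes "smooth h"
  shows "((\<lambda>z. h (s *\<^sub>R z)) has_derivative
          (\<lambda>v. s * (fst v * Dx h (s *\<^sub>R z) + snd v * Dy h (s *\<^sub>R z)))) (at z within U)"
proof -
  have d: "h differentiable (at (s *\<^sub>R z))" using smooth_imp_differentiable[OF assms] .
  have "((\<lambda>z. s *\<^sub>R z) has_derivative (\<lambda>v. s *\<^sub>R v)) (at z within U)"
    by (auto intro!: derivative_eq_intros)
  from has_derivative_compose[OF this has_derivative_Dir[OF d]]
  show ?thesis using Dir_scaleR_direction[OF d] Dir_eq_Dx_Dy[OF d] by simp
qed

lemma continuous_on_comp_scaleR:
  assumes "smooth h"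
  shows "continuous_on S (\<lambda>q::pt \<times> real. h (snd q *\<^sub>R fst q))"
  by (rule continuous_on_compose2[OF smooth_imp_continuous_on[OF assms] _ subset_UNIV])
    (intro continuous_intros)

text \<open>Along the ray through \<open>z\<close>, the curl-free condition turns the \<open>z\<close>-derivative of the
  integrand \<open>W(s z) \<bullet> z\<close> into the \<open>s\<close>-derivative of \<open>s W(s z)\<close>.\<close>

lemma integral_radial_derivative:
  assumes "smooth V" and G: "\<And>w. fst z * Dx V w + snd z * Dy V w = G w"
  shows "integral {0..1} (\<lambda>s. s * G (s *\<^sub>R z) + V (s *\<^sub>R z)) = V z"
proof -
  have d: "\<And>w. V differentiable (at w)" using smooth_imp_differentiable[OF assms(1)] .
  have "((\<lambda>s. s * V (s *\<^sub>R z)) has_vector_derivative (s * G (s *\<^sub>R z) + V (s *\<^sub>R z)))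
          (at s within {0..1})" for s
  proof -
    have "((\<lambda>s. s * V (0 + s *\<^sub>R z)) has_real_derivative
           (1 * V (0 + s *\<^sub>R z) + Dir z V (0 + s *\<^sub>R z) * s)) (at s within {0..1})"
      by (rule DERIV_mult[OF DERIV_ident has_real_derivative_line[OF d]])
    then show ?thesis
      using Dir_eq_Dx_Dy[OF d, of z "s *\<^sub>R z"] G[of "s *\<^sub>R z"]
      by (simp add: algebra_simps has_real_derivative_iff_has_vector_derivative)
  qed
  from fundamental_theorem_of_calculus[of 0 1, OF _ this] show ?thesis
    by (simp add: integral_unique)
qed

lemma has_derivative_parametric_integral:
  fixes f a b :: "pt \<Rightarrow> real \<Rightarrow> real"
  assumes f: "\<And>z s. ((\<lambda>z. f z s) has_derivative (\<lambda>v. a z s * fst v + b z s * snd v)) (at z)"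
    and ca: "continuous_on UNIV (\<lambda>(z, s). a z s)" and cb: "continuous_on UNIV (\<lambda>(z, s). b z s)"
    and fi: "\<And>z. f z integrable_on {0..1}"
  shows "((\<lambda>z. integral {0..1} (f z)) has_derivative
          (\<lambda>v. integral {0..1} (a z) * fst v + integral {0..1} (b z) * snd v)) (at z)"
proof -
  define fx where "fx z s = Blinfun (\<lambda>v::pt. a z s * fst v + b z s * snd v)" for z s
  have fx_apply: "blinfun_apply (fx z s) = (\<lambda>v. a z s * fst v + b z s * snd v)" for z s
    unfolding fx_def by (rule bounded_linear_Blinfun_apply) (intro bounded_linear_intros)
  have cfx: "continuous_on (UNIV \<times> cbox 0 1) (\<lambda>(z, s). fx z s)"
    by (rule continuous_on_blinfun_componentwise)
      (use ca cb in \<open>auto simp: fx_apply case_prod_beta' intro!: continuous_intros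
        intro: continuous_on_subset\<close>)
  have "((\<lambda>z. integral (cbox 0 1) (f z)) has_derivative blinfun_apply (integral (cbox 0 1) (fx z)))
          (at z within UNIV)"
    by (rule leibniz_rule) (use f fi cfx in \<open>auto simp: fx_apply cbox_interval\<close>)
  moreover have "blinfun_apply (integral (cbox 0 1) (fx z)) =
      (\<lambda>v. integral {0..1} (a z) * fst v + integral {0..1} (b z) * snd v)"
  proof
    fix v :: pt
    have int_on: "(\<lambda>s. g (z, s)) integrable_on {0..1}" if "continuous_on UNIV g" for g :: "pt \<times> real \<Rightarrow> real"
      by (rule integrable_continuous_real, rule continuous_on_compose2[OF that]) (auto intro!: continuous_intros)
    have "continuous_on (cbox 0 1) (\<lambda>s. (\<lambda>(z,s). fx z s) (z, s))"
      by (rule continuous_on_compose2[OF cfx]) (auto intro!: continuous_intros)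
    then have "fx z integrable_on cbox 0 1" by (simp add: integrable_continuous_interval)
    then show "blinfun_apply (integral (cbox 0 1) (fx z)) v =
        integral {0..1} (a z) * fst v + integral {0..1} (b z) * snd v"
      using int_on[OF ca] int_on[OF cb]
      by (simp add: blinfun_apply_integral fx_apply cbox_interval integral_add integral_mult_left
          integrable_on_mult_left)
  qed
  ultimately show ?thesis by (simp add: cbox_interval)
qed

lemma curl_free_radial_potential:
  assumes s1: "smooth W1" and s2: "smooth W2" and curl: "\<And>z. Dy W1 z = Dx W2 z"
  shows "((\<lambda>z. integral {0..1} (\<lambda>s. W1 (s *\<^sub>R z) * fst z + W2 (s *\<^sub>R z) * snd z)) has_derivative
          (\<lambda>v. W1 z * fst v + W2 z * snd v)) (at z)"
proof -
  define a where "a z s = s * (Dx W1 (s *\<^sub>R z) * fst z + Dx W2 (s *\<^sub>R z) * snd z) + W1 (s *\<^sub>R z)"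
    for z :: pt and s :: real
  define b where "b z s = s * (Dy W1 (s *\<^sub>R z) * fst z + Dy W2 (s *\<^sub>R z) * snd z) + W2 (s *\<^sub>R z)"
    for z :: pt and s :: real
  have "((\<lambda>z. W1 (s *\<^sub>R z) * fst z + W2 (s *\<^sub>R z) * snd z) has_derivative
      (\<lambda>v. a z s * fst v + b z s * snd v)) (at z)" for z s
  proof -
    have "((\<lambda>z. W1 (s *\<^sub>R z) * fst z + W2 (s *\<^sub>R z) * snd z) has_derivative
        (\<lambda>v. W1 (s *\<^sub>R z) * fst v + s * (fst v * Dx W1 (s *\<^sub>R z) + snd v * Dy W1 (s *\<^sub>R z)) * fst z +
              (W2 (s *\<^sub>R z) * snd v + s * (fst v * Dx W2 (s *\<^sub>R z) + snd v * Dy W2 (s *\<^sub>R z)) * snd z)))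
        (at z)"
      by (intro has_derivative_add has_derivative_mult has_derivative_comp_scaleR s1 s2
          has_derivative_fst has_derivative_snd has_derivative_ident)
    then show ?thesis unfolding a_def b_def by (simp add: algebra_simps)
  qed
  moreover have "continuous_on UNIV (\<lambda>(z,s). a z s)"
    unfolding a_def case_prod_beta'
    using s1 s2 by (intro continuous_intros continuous_on_comp_scaleR smooth_Dx smooth_Dy)
  moreover have "continuous_on UNIV (\<lambda>(z,s). b z s)"
    unfolding b_def case_prod_beta'
    using s1 s2 by (intro continuous_intros continuous_on_comp_scaleR smooth_Dx smooth_Dy)
  moreover have "(\<lambda>s. W1 (s *\<^sub>R z) * fst z + W2 (s *\<^sub>R z) * snd z) integrable_on {0..1}" for z
    by (rule integrable_continuous_real)
      (intro continuous_intros continuous_on_compose2[OF smooth_imp_continuous_on[OF s1]]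
        continuous_on_compose2[OF smooth_imp_continuous_on[OF s2]]; auto)
  moreover have "integral {0..1} (a z) = W1 z" "integral {0..1} (b z) = W2 z"
    unfolding a_def b_def
    by (rule integral_radial_derivative[OF s1], simp add: curl algebra_simps,
        rule integral_radial_derivative[OF s2], simp add: curl algebra_simps)
  ultimately show ?thesis
    using has_derivative_parametric_integral[of
        "\<lambda>z s. W1 (s *\<^sub>R z) * fst z + W2 (s *\<^sub>R z) * snd z" a b z] by simp
qed

lemma shift_difference_constant:
  assumes d: "\<And>z. (p has_derivative (\<lambda>v. F z * fst v + G z * snd v)) (at z)"
    and "\<And>z. F (z + e) = F z" "\<And>z. G (z + e) = G z"
  shows "\<exists>c. \<forall>z. p (z + e) - p z = c"
proof -
  have "((\<lambda>w. w + e) has_derivative (\<lambda>h. h)) (at z)" for z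
    by (auto intro!: derivative_eq_intros)
  then have "((\<lambda>z. p (z + e) - p z) has_derivative
      (\<lambda>v. (F (z + e) * fst v + G (z + e) * snd v) - (F z * fst v + G z * snd v))) (at z within UNIV)" for z
    by (intro has_derivative_diff has_derivative_compose[OF _ d] d)
  then have "((\<lambda>z. p (z + e) - p z) has_derivative (\<lambda>v. 0)) (at z within UNIV)" for z
    using assms(2,3) by simp
  from has_derivative_zero_constant[of UNIV, OF _ this] show ?thesis by auto
qed

theorem poincare_lemma_torus:
  assumes t1: "tfun W1" and t2: "tfun W2" and "tint W1 = 0" and "tint W2 = 0"
    and curl: "\<And>z. Dy W1 z = Dx W2 z"
  shows "\<exists>p. tfun p \<and> (\<forall>z. Dx p z = W1 z \<and> Dy p z = W2 z)"
proof -
  have s1: "smooth W1" and s2: "smooth W2" using t1 t2 tfun_smooth by blast+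
  define p where "p z = integral {0..1} (\<lambda>s. W1 (s *\<^sub>R z) * fst z + W2 (s *\<^sub>R z) * snd z)" for z
  have deriv: "(p has_derivative (\<lambda>v. W1 z * fst v + W2 z * snd v)) (at z)" for z
    unfolding p_def[abs_def] by (rule curl_free_radial_potential[OF s1 s2 curl])
  have dp: "\<And>z. p differentiable (at z)" using deriv differentiable_def by blast
  have Dir_p: "Dir v p = (\<lambda>z. W1 z * fst v + W2 z * snd v)" for v
    using Dir_eq[OF deriv] by blast
  have "smooth p"
    by (subst smooth_iff_Dir) (simp add: dp Dir_p s1 s2 smooth_add smooth_mult)
  have per: "W (w + (1,0)) = W w" "W (w + (0,1)) = W w" if "tfun W" for W w
    using tfun_periodic[OF that] unfolding periodic_iff_shift by blast+
  \<comment> \<open>the periods of the potential are the means of \<open>W1\<close> and \<open>W2\<close>, which vanish\<close>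
  have "\<forall>w. p (w + (1,0)) = p w"
  proof -
    obtain c where c: "\<And>z. p (z + (1,0)) - p z = c"
      using shift_difference_constant[where F=W1 and G=W2, OF deriv per(1)[OF t1] per(1)[OF t2]] by blast
    have "integral {0..1} (\<lambda>x. W1 (x,y)) = c" for y
      using integral_Dir_line[OF dp, of 0 1 "(1,0)" "(0,y)"] c[of "(0,y)"] by (simp add: Dir_p)
    then have "c = tint W1" using tint_iterated_x_y[OF s1] by simp
    with c \<open>tint W1 = 0\<close> show ?thesis by simp
  qed
  moreover have "\<forall>w. p (w + (0,1)) = p w"
  proof -
    obtain c where c: "\<And>z. p (z + (0,1)) - p z = c"
      using shift_difference_constant[where F=W1 and G=W2, OF deriv per(2)[OF t1] per(2)[OF t2]] by blast
    have "integral {0..1} (\<lambda>y. W2 (x,y)) = c" for x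
      using integral_Dir_line[OF dp, of 0 1 "(0,1)" "(x,0)"] c[of "(x,0)"] by (simp add: Dir_p)
    then have "c = tint W2" using tint_iterated_y_x[OF s2] by simp
    with c \<open>tint W2 = 0\<close> show ?thesis by simp
  qed
  ultimately have "tfun p" using \<open>smooth p\<close> unfolding tfun_def periodic_iff_shift by simp
  moreover have "Dx p z = W1 z \<and> Dy p z = W2 z" for z unfolding Dx_def Dy_def Dir_p by simp
  ultimately show ?thesis by blast
qed

lemma Xsigma_components:
  assumes "X \<in> Xsigma"
  shows "tfun (\<lambda>w. fst (X w))" "tfun (\<lambda>w. snd (X w))"
    and "\<And>z. Dx (\<lambda>w. fst (X w)) z + Dy (\<lambda>w. snd (X w)) z = 0"
  using assms unfolding Xsigma_def vf_def divg_def by auto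

lemma const_in_Xsigma: "(\<lambda>z. c) \<in> Xsigma"
  unfolding Xsigma_def vf_def divg_def by simp

lemma ham_in_Xsigma:
  assumes "tfun h"
  shows "ham h \<in> Xsigma"
proof -
  have "smooth h" using assms tfun_smooth by blast
  then have "divg (ham h) z = 0" for z
    unfolding divg_def ham_def using Dy_uminus[OF smooth_Dx] Dx_Dy_commute by simp
  moreover have "vf (ham h)" unfolding vf_def ham_def using assms by (simp add: tfun_Dx tfun_Dy tfun_uminus)
  ultimately show ?thesis unfolding Xsigma_def by blast
qed

lemma ham_const: "ham (\<lambda>z. c) = (\<lambda>z. 0)"
  unfolding ham_def by (simp add: zero_prod_def)

lemma ham_uminus: "smooth f \<Longrightarrow> ham (\<lambda>z. - f z) z = - ham f z"
  unfolding ham_def by (simp add: Dx_uminus Dy_uminus)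

definition vf_mean :: "(pt \<Rightarrow> pt) \<Rightarrow> pt" where
  "vf_mean X = (tint (\<lambda>w. fst (X w)), tint (\<lambda>w. snd (X w)))"

text \<open>The Hamiltonian is a potential of the closed 1-form \<open>i\<^sub>X \<sigma> - \<langle>i\<^sub>X \<sigma>\<rangle>\<close>; normalised
  to mean zero it is \<open>\<psi>\<^sub>X\<close>.\<close>

lemma Xsigma_eq_mean_plus_ham:
  assumes X: "X \<in> Xsigma"
  shows "\<exists>h. tfun h \<and> tint h = 0 \<and> (\<forall>z. X z = vf_mean X + ham h z)"
proof -
  note XD = Xsigma_components[OF X]
  have s1: "smooth (\<lambda>w. fst (X w))" and s2: "smooth (\<lambda>w. snd (X w))" using XD tfun_smooth by blast+
  define W1 where "W1 z = snd (vf_mean X) - snd (X z)" for z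
  define W2 where "W2 z = fst (X z) - fst (vf_mean X)" for z
  have t1: "tfun W1" and t2: "tfun W2" unfolding W1_def W2_def by (intro tfun_diff tfun_const XD)+
  have "tint W1 = 0" "tint W2 = 0"
    unfolding W1_def W2_def vf_mean_def using tint_diff[OF smooth_const s2] tint_diff[OF s1 smooth_const]
    by simp_all
  moreover have "Dy W1 z = Dx W2 z" for z
    unfolding W1_def W2_def
    using Dy_diff[OF smooth_const s2] Dx_diff[OF s1 smooth_const] XD(3)[of z] by simp
  ultimately obtain p where p: "tfun p" "\<And>z. Dx p z = W1 z" "\<And>z. Dy p z = W2 z"
    using poincare_lemma_torus[OF t1 t2] by blast
  define h where "h z = p z - tint p" for z
  have sp: "smooth p" using p(1) tfun_smooth by blast
  have "tfun h" unfolding h_def by (intro tfun_diff p(1) tfun_const)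
  moreover have "tint h = 0" unfolding h_def using tint_diff[OF sp smooth_const] by simp
  moreover have "Dx h z = W1 z" "Dy h z = W2 z" for z
    unfolding h_def using Dx_diff[OF sp smooth_const] Dy_diff[OF sp smooth_const] p by simp_all
  then have "X z = vf_mean X + ham h z" for z
    unfolding ham_def W1_def W2_def by (simp add: prod_eq_iff)
  ultimately show ?thesis by blast
qed

lemma ham_part_eqI:
  assumes th: "tfun h" and mh: "tint h = 0" and Xh: "\<And>z. X z = c + ham h z"
  shows "ham_part X = h"
  unfolding ham_part_def
proof (rule the_equality)
  show "tfun h \<and> tint h = 0 \<and> (\<exists>c. \<forall>z. X z = c + ham h z)" using assms by blast
next
  fix f assume "tfun f \<and> tint f = 0 \<and> (\<exists>c. \<forall>z. X z = c + ham f z)"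
  then obtain c' where tf: "tfun f" and mf: "tint f = 0" and Xf: "\<And>z. X z = c' + ham f z" by blast
  have e: "c' + ham f z = c + ham h z" for z using Xf Xh by metis
  show "f = h"
  proof (rule tfun_eqI[OF tf th])
    show "tint f = tint h" using mf mh by simp
    show "Dx f z - Dx h z = snd c' - snd c" for z using e[of z] unfolding ham_def by (auto simp: prod_eq_iff)
    show "Dy f z - Dy h z = fst c - fst c'" for z using e[of z] unfolding ham_def by (auto simp: prod_eq_iff)
  qed
qed

lemma ham_part_const: "ham_part (\<lambda>z. c) = (\<lambda>z. 0)"
  by (rule ham_part_eqI[where c=c]) (auto simp: ham_const)

lemma ham_part_ham: "tfun h \<Longrightarrow> tint h = 0 \<Longrightarrow> ham_part (ham h) = h"
  by (rule ham_part_eqI[where c=0]) auto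

lemma psi_eqI:
  assumes th: "tfun h" and mh: "tint h = 0" and Xh: "\<And>z. X z = vf_mean X + ham h z"
  shows "psi X = h"
  unfolding psi_def
proof (rule the_equality)
  have dh: "dfun h z = isigma X z - avg1 (isigma X) z" for z
    using Xh[of z] unfolding dfun_def isigma_def avg1_def vf_mean_def ham_def
    by (auto simp: prod_eq_iff tint_uminus)
  then show "tfun h \<and> (\<forall>z. dfun h z = isigma X z - avg1 (isigma X) z) \<and> tint h = 0"
    using th mh by blast
  fix f assume "tfun f \<and> (\<forall>z. dfun f z = isigma X z - avg1 (isigma X) z) \<and> tint f = 0"
  then have tf: "tfun f" and df: "\<And>z. dfun f z = dfun h z" and mf: "tint f = 0" using dh by auto
  show "f = h"
  proof (rule tfun_eqI[OF tf th])
    show "tint f = tint h" using mf mh by simp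
    show "Dx f z - Dx h z = 0" "Dy f z - Dy h z = 0" for z using df[of z] unfolding dfun_def by simp_all
  qed
qed

lemma tfun_psi: "X \<in> Xsigma \<Longrightarrow> tfun (psi X)"
  using Xsigma_eq_mean_plus_ham psi_eqI by metis

section \<open>L2 duality and the Hodge decomposition\<close>

definition l2 :: "(pt \<Rightarrow> pt) \<Rightarrow> (pt \<Rightarrow> pt) \<Rightarrow> real" where
  "l2 X Y = tint (\<lambda>z. X z \<bullet> Y z)"

lemma inner_pt: "(a::pt) \<bullet> b = fst a * fst b + snd a * snd b"
  by (cases a, cases b) simp

lemma vf_Xsigma: "X \<in> Xsigma \<Longrightarrow> vf X"
  unfolding Xsigma_def by blast

lemma vf_add: "vf A \<Longrightarrow> vf B \<Longrightarrow> vf (\<lambda>z. A z + B z)"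
  and vf_diff: "vf A \<Longrightarrow> vf B \<Longrightarrow> vf (\<lambda>z. A z - B z)"
  and vf_uminus: "vf A \<Longrightarrow> vf (\<lambda>z. - A z)"
  and vf_scaleR: "tfun f \<Longrightarrow> vf A \<Longrightarrow> vf (\<lambda>z. f z *\<^sub>R A z)"
  unfolding vf_def by (simp_all add: tfun_add tfun_diff tfun_uminus tfun_mult)

lemma vf_grad: "tfun p \<Longrightarrow> vf (grad p)"
  unfolding vf_def grad_def sharp_def dfun_def by (simp add: tfun_Dx tfun_Dy)

lemma
  assumes "vf A" "vf B" "vf V"
  shows l2_add_left: "l2 (\<lambda>z. A z + B z) V = l2 A V + l2 B V"
    and l2_diff_left: "l2 (\<lambda>z. A z - B z) V = l2 A V - l2 B V"
proof -
  have "smooth (\<lambda>z. X z \<bullet> V z)" if "vf X" for X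
    using that assms(3) unfolding vf_def inner_pt by (intro smooth_add smooth_mult tfun_smooth; simp)
  then show "l2 (\<lambda>z. A z + B z) V = l2 A V + l2 B V" "l2 (\<lambda>z. A z - B z) V = l2 A V - l2 B V"
    unfolding l2_def using assms tint_add tint_diff by (simp_all add: inner_add_left inner_diff_left)
qed

lemma act_add: "smooth f \<Longrightarrow> smooth g \<Longrightarrow> act X (\<lambda>w. f w + g w) z = act X f z + act X g z"
  and act_mult: "smooth f \<Longrightarrow> smooth g \<Longrightarrow> act X (\<lambda>w. f w * g w) z = act X f z * g z + f z * act X g z"
  unfolding act_def by (simp_all add: Dx_add Dy_add Dx_mult Dy_mult algebra_simps)

lemma tfun_act: "vf X \<Longrightarrow> tfun h \<Longrightarrow> tfun (act X h)"
  unfolding vf_def act_def[abs_def] by (intro tfun_add tfun_mult tfun_Dx tfun_Dy; simp)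

lemma vf_nabla:
  assumes "vf U"
  shows "vf (nabla U U)"
proof -
  have "tfun (act U (\<lambda>w. fst (U w)))" "tfun (act U (\<lambda>w. snd (U w)))"
    using tfun_act[OF assms] assms unfolding vf_def by blast+
  then show ?thesis unfolding vf_def nabla_def by simp
qed

text \<open>Since \<open>div X = 0\<close>, \<open>X h = div (h X)\<close>, which integrates to zero over the torus.\<close>

lemma tint_act_zero:
  assumes X: "X \<in> Xsigma" and h: "tfun h"
  shows "tint (act X h) = 0"
proof -
  note XD = Xsigma_components[OF X]
  have s1: "smooth (\<lambda>w. fst (X w))" and s2: "smooth (\<lambda>w. snd (X w))" and sh: "smooth h"
    using XD h tfun_smooth by blast+
  have e: "act X h = (\<lambda>z. Dx (\<lambda>w. fst (X w) * h w) z + Dy (\<lambda>w. snd (X w) * h w) z)"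
  proof
    fix z
    have "Dx (\<lambda>w. fst (X w) * h w) z + Dy (\<lambda>w. snd (X w) * h w) z =
       (Dx (\<lambda>w. fst (X w)) z + Dy (\<lambda>w. snd (X w)) z) * h z + act X h z"
      unfolding act_def Dx_mult[OF s1 sh] Dy_mult[OF s2 sh] by (simp add: algebra_simps)
    with XD(3)[of z] show "act X h z = Dx (\<lambda>w. fst (X w) * h w) z + Dy (\<lambda>w. snd (X w) * h w) z"
      by simp
  qed
  have "tint (act X h) = tint (Dx (\<lambda>w. fst (X w) * h w)) + tint (Dy (\<lambda>w. snd (X w) * h w))"
    unfolding e by (rule tint_add) (intro smooth_Dx smooth_Dy smooth_mult s1 s2 sh)+
  also have "\<dots> = 0"
    using tint_Dx_zero[OF tfun_mult[OF XD(1) h]] tint_Dy_zero[OF tfun_mult[OF XD(2) h]] by simp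
  finally show ?thesis .
qed

lemma l2_lie_bracket:
  assumes U: "U \<in> Xsigma" and V: "V \<in> Xsigma"
  shows "l2 U (lie_bracket U V) = l2 (nabla U U) V"
proof -
  define u1 where "u1 = (\<lambda>w. fst (U w))"
  define u2 where "u2 = (\<lambda>w. snd (U w))"
  define v1 where "v1 = (\<lambda>w. fst (V w))"
  define v2 where "v2 = (\<lambda>w. snd (V w))"
  have t: "tfun u1" "tfun u2" "tfun v1" "tfun v2"
    using Xsigma_components[OF U] Xsigma_components[OF V] unfolding u1_def u2_def v1_def v2_def by auto
  then have s: "smooth u1" "smooth u2" "smooth v1" "smooth v2" using tfun_smooth by blast+
  define UV where "UV w = u1 w * v1 w + u2 w * v2 w" for w
  define UU where "UU w = u1 w * u1 w + u2 w * u2 w" for w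
  have tUV: "tfun UV" unfolding UV_def using t by (intro tfun_add tfun_mult)
  have tUU: "tfun UU" unfolding UU_def using t by (intro tfun_add tfun_mult)
  have pointwise: "U z \<bullet> lie_bracket U V z = (nabla U U z \<bullet> V z - act U UV z) + (1/2) * act V UU z" for z
  proof -
    have a1: "act U UV z = act U u1 z * v1 z + u1 z * act U v1 z + (act U u2 z * v2 z + u2 z * act U v2 z)"
      unfolding UV_def[abs_def] by (simp add: act_add act_mult smooth_mult s)
    have a2: "act V UU z = act V u1 z * u1 z + u1 z * act V u1 z + (act V u2 z * u2 z + u2 z * act V u2 z)"
      unfolding UU_def[abs_def] by (simp add: act_add act_mult smooth_mult s)
    show ?thesis unfolding a1 a2 inner_pt lie_bracket_def vf_bracket_def nabla_def
      u1_def[symmetric] u2_def[symmetric] v1_def[symmetric] v2_def[symmetric]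
      by (simp add: u1_def u2_def v1_def v2_def algebra_simps)
  qed
  have sN: "smooth (\<lambda>z. nabla U U z \<bullet> V z)"
    using vf_nabla[OF vf_Xsigma[OF U]] vf_Xsigma[OF V]
    unfolding vf_def inner_pt by (intro smooth_add smooth_mult tfun_smooth; simp)
  have sA: "smooth (act U UV)" and sB: "smooth (act V UU)"
    using tfun_act[OF vf_Xsigma[OF U] tUV] tfun_act[OF vf_Xsigma[OF V] tUU] tfun_smooth by blast+
  have "l2 U (lie_bracket U V) = tint (\<lambda>z. (nabla U U z \<bullet> V z - act U UV z) + (1/2) * act V UU z)"
    unfolding l2_def pointwise ..
  also have "\<dots> = tint (\<lambda>z. nabla U U z \<bullet> V z - act U UV z) + tint (\<lambda>z. (1/2) * act V UU z)"
    by (rule tint_add) (intro smooth_diff smooth_cmult sN sA sB)+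
  also have "\<dots> = (tint (\<lambda>z. nabla U U z \<bullet> V z) - tint (act U UV)) + (1/2) * tint (act V UU)"
    unfolding tint_diff[OF sN sA] tint_cmult ..
  also have "\<dots> = l2 (nabla U U) V"
    using tint_act_zero[OF U tUV] tint_act_zero[OF V tUU] unfolding l2_def by simp
  finally show ?thesis .
qed

lemma l2_grad_Xsigma: "V \<in> Xsigma \<Longrightarrow> tfun p \<Longrightarrow> l2 (grad p) V = 0"
  using tint_act_zero[of V p] unfolding l2_def grad_def sharp_def dfun_def act_def inner_pt
  by (simp add: algebra_simps)

text \<open>Testing against constant fields kills the mean of \<open>W\<close>, testing against
  \<open>H\<^sub>k\<close> with \<open>k\<close> the curl of \<open>W\<close> kills the curl; the Poincare lemma then provides the potential.\<close>

theorem orthogonal_Xsigma_imp_grad: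
  assumes W: "vf W" and orth: "\<And>V. V \<in> Xsigma \<Longrightarrow> l2 W V = 0"
  shows "\<exists>p. tfun p \<and> (\<forall>z. W z = grad p z)"
proof -
  define W1 where "W1 = (\<lambda>w. fst (W w))"
  define W2 where "W2 = (\<lambda>w. snd (W w))"
  have t1: "tfun W1" and t2: "tfun W2" using W unfolding vf_def W1_def W2_def by auto
  have s1: "smooth W1" and s2: "smooth W2" using t1 t2 tfun_smooth by blast+
  have "tint W1 = 0" using orth[OF const_in_Xsigma[of "(1,0)"]] unfolding l2_def W1_def inner_pt by simp
  moreover have "tint W2 = 0" using orth[OF const_in_Xsigma[of "(0,1)"]] unfolding l2_def W2_def inner_pt by simp
  moreover have "Dy W1 z = Dx W2 z" for z
  proof -
    define k where "k z = Dx W2 z - Dy W1 z" for z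
    have tk: "tfun k" unfolding k_def by (intro tfun_diff tfun_Dx tfun_Dy t1 t2)
    have sk: "smooth k" using tk tfun_smooth by blast
    have "0 = l2 W (ham k)" using orth[OF ham_in_Xsigma[OF tk]] by simp
    also have "\<dots> = tint (\<lambda>z. W1 z * Dy k z - W2 z * Dx k z)"
      unfolding l2_def inner_pt ham_def W1_def W2_def by simp
    also have "\<dots> = tint (\<lambda>z. W1 z * Dy k z) - tint (\<lambda>z. W2 z * Dx k z)"
      by (rule tint_diff) (intro smooth_mult smooth_Dx smooth_Dy s1 s2 sk)+
    also have "\<dots> = tint (\<lambda>z. Dx W2 z * k z) - tint (\<lambda>z. Dy W1 z * k z)"
      using tint_Dy_mult[OF t1 tk] tint_Dx_mult[OF t2 tk] by simp
    also have "\<dots> = tint (\<lambda>z. Dx W2 z * k z - Dy W1 z * k z)"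
      by (rule tint_diff[symmetric]) (intro smooth_mult smooth_Dx smooth_Dy s1 s2 sk)+
    also have "\<dots> = tint (\<lambda>z. k z * k z)"
      unfolding k_def by (simp add: left_diff_distrib)
    finally have "tint (\<lambda>z. k z * k z) = 0" by simp
    then have "k z = 0" by (rule tint_square_eq_zero_imp_zero[OF tk])
    then show ?thesis unfolding k_def by simp
  qed
  ultimately obtain p where p: "tfun p" "\<And>z. Dx p z = W1 z" "\<And>z. Dy p z = W2 z"
    using poincare_lemma_torus[OF t1 t2] by blast
  then have "W z = grad p z" for z unfolding grad_def sharp_def dfun_def p W1_def W2_def by simp
  with p(1) show ?thesis by blast
qed

section \<open>The cocycle condition forces a constant 1-form\<close>

definition wave :: "pt \<Rightarrow> real \<Rightarrow> pt \<Rightarrow> real" where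
  "wave k p z = sin (2 * pi * (k \<bullet> z) + p)"

lemma has_derivative_wave:
  "(wave k p has_derivative (\<lambda>v. 2 * pi * (k \<bullet> v) * cos (2 * pi * (k \<bullet> z) + p))) (at z)"
  unfolding wave_def[abs_def] by (auto intro!: derivative_eq_intros)

lemma Dir_wave: "Dir v (wave k p) z = 2 * pi * (k \<bullet> v) * cos (2 * pi * (k \<bullet> z) + p)"
  by (rule Dir_eq[OF has_derivative_wave])

lemma tfun_wave:
  assumes "fst k \<in> \<int>" "snd k \<in> \<int>"
  shows "tfun (wave k p)"
proof -
  have "smooth (\<lambda>z. 1 * sin (2 * pi * (k \<bullet> z) + p))"
    by (rule smooth_sin) (intro bounded_linear_intros)
  moreover have "wave k p (w + e) = wave k p w" if "k \<bullet> e \<in> \<int>" for w e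
  proof -
    have arg: "2 * pi * (k \<bullet> (w + e)) + p = (2 * pi * (k \<bullet> w) + p) + 2 * pi * (k \<bullet> e)"
      by (simp add: algebra_simps)
    show ?thesis
      unfolding wave_def arg sin_add[of "2 * pi * (k \<bullet> w) + p"]
      using sin_integer_2pi[OF that] cos_integer_2pi[OF that] by simp
  qed
  then have "periodic (wave k p)"
    using assms unfolding periodic_iff_shift by (simp add: inner_pt)
  ultimately show ?thesis unfolding tfun_def wave_def[abs_def] by simp
qed

lemma tint_wave:
  assumes "fst k \<in> \<int>" "snd k \<in> \<int>" "k \<noteq> 0"
  shows "tint (wave k p) = 0"
proof -
  \<comment> \<open>a wave is the derivative along \<open>k\<close> of the wave shifted by a quarter period\<close>
  define c where "c = 1 / (2 * pi * (k \<bullet> k))"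
  have "smooth (wave k (p - pi/2))" using tfun_wave[OF assms(1,2)] tfun_smooth by blast
  then have "Dir k (\<lambda>z. c * wave k (p - pi/2) z) z = c * Dir k (wave k (p - pi/2)) z" for z
    by (simp add: Dir_cmult smooth_imp_differentiable)
  also have "\<dots> z = c * (2 * pi * (k \<bullet> k)) * cos ((2 * pi * (k \<bullet> z) + p) - pi/2)" for z
    unfolding Dir_wave by (simp add: algebra_simps)
  also have "\<dots> z = wave k p z" for z
    using assms(3) unfolding c_def wave_def by (simp add: cos_diff)
  finally have "Dir k (\<lambda>z. c * wave k (p - pi/2) z) z = wave k p z" for z .
  then have "wave k p = Dir k (\<lambda>z. c * wave k (p - pi/2) z)" by auto
  then show ?thesis using tint_Dir_zero[OF tfun_cmult[OF tfun_wave[OF assms(1,2)]]] by simp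
qed

lemma closed_form_components:
  "closed_form \<alpha> \<Longrightarrow> tfun (\<lambda>w. fst (\<alpha> w))"
  "closed_form \<alpha> \<Longrightarrow> tfun (\<lambda>w. snd (\<alpha> w))"
  unfolding closed_form_def vf_def by auto

lemma act_const: "smooth f \<Longrightarrow> act (\<lambda>z. c) f z = Dir c f z"
  unfolding act_def by (simp add: Dir_eq_Dx_Dy smooth_imp_differentiable)

lemma act_const_fun: "act X (\<lambda>w. k) z = 0"
  unfolding act_def by simp

lemma lie_bracket_commute: "lie_bracket Y X z = - lie_bracket X Y z"
  unfolding lie_bracket_def vf_bracket_def by simp

lemma lie_bracket_const_ham:
  assumes "tfun f"
  shows "lie_bracket (\<lambda>z. c) (ham f) = ham (\<lambda>z. - Dir c f z)"
proof
  fix z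
  have s: "smooth f" using assms tfun_smooth by blast
  have "Dir c (Dy f) z = Dy (Dir c f) z" "Dir c (\<lambda>w. - Dx f w) z = - Dx (Dir c f) z"
    using Dir_cmult[of "Dx f" z c "-1"] s
    unfolding Dx_def Dy_def by (simp_all add: Dir_Dir_commute smooth_imp_differentiable smooth_Dir)
  then show "lie_bracket (\<lambda>z. c) (ham f) z = ham (\<lambda>z. - Dir c f z) z"
    unfolding lie_bracket_def vf_bracket_def ham_def
    using s by (simp add: act_const act_const_fun smooth_Dx smooth_Dy smooth_uminus smooth_Dir Dx_uminus
        Dy_uminus[OF smooth_Dir])
qed

lemma lie_bracket_ham_const:
  assumes "tfun h"
  shows "lie_bracket (ham h) (\<lambda>z. c) = ham (Dir c h)"
proof
  fix z
  have "smooth (Dir c h)" using assms tfun_smooth smooth_Dir by blast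
  then show "lie_bracket (ham h) (\<lambda>z. c) z = ham (Dir c h) z"
    by (simp add: lie_bracket_commute[of "ham h"] lie_bracket_const_ham[OF assms] ham_uminus)
qed

lemma omega_ham_right:
  "tfun h \<Longrightarrow> tint h = 0 \<Longrightarrow> omega \<alpha> X (ham h) = tint (\<lambda>z. ham_part X z * eval1 \<alpha> (ham h) z)"
  unfolding omega_def by (simp add: ham_part_ham)

lemma omega_const_right: "omega \<alpha> X (\<lambda>z. c) = 0"
  unfolding omega_def eval1_def ham_part_const ham_const by simp

lemma Dir_pairing_ham_commutator:
  assumes a: "smooth a" and b: "smooth b" and h: "smooth h"
  shows "Dir c (\<lambda>z. a z * Dy h z - b z * Dx h z) z - (a z * Dy (Dir c h) z - b z * Dx (Dir c h) z) =
         Dir c a z * Dy h z - Dir c b z * Dx h z"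
proof -
  have "Dir c (Dy h) z = Dy (Dir c h) z" "Dir c (Dx h) z = Dx (Dir c h) z"
    using h unfolding Dx_def Dy_def by (simp_all add: Dir_Dir_commute)
  then show ?thesis
    using a b h by (simp add: Dir_diff Dir_mult smooth_imp_differentiable smooth_mult smooth_Dx smooth_Dy
        algebra_simps)
qed

text \<open>Testing the cocycle identity on \<open>(c, H\<^sub>f, H\<^sub>h)\<close> with \<open>c\<close> constant shows that the 1-form
  \<open>L\<^sub>c \<alpha>\<close> pairs to zero against all pairs of Hamiltonian fields.\<close>

lemma cocycle_Dir_alpha_orthogonal:
  assumes cf: "closed_form \<alpha>" and coc: "is_2cocycle (omega \<alpha>)"
    and tf: "tfun f" and mf: "tint f = 0" and th: "tfun h" and mh: "tint h = 0"
  shows "tint (\<lambda>z. f z * (Dir c (\<lambda>w. fst (\<alpha> w)) z * Dy h z - Dir c (\<lambda>w. snd (\<alpha> w)) z * Dx h z)) = 0"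
proof -
  define a where "a = (\<lambda>w. fst (\<alpha> w))"
  define b where "b = (\<lambda>w. snd (\<alpha> w))"
  have ta: "tfun a" and tb: "tfun b" unfolding a_def b_def using closed_form_components[OF cf] by auto
  have sa: "smooth a" and sb: "smooth b" and sh: "smooth h" using ta tb th tfun_smooth by blast+
  define E where "E g z = eval1 \<alpha> (ham g) z" for g z
  have E_eq: "E g = (\<lambda>z. a z * Dy g z - b z * Dx g z)" for g
    unfolding E_def eval1_def ham_def a_def b_def by auto
  have tE: "tfun (E h)" unfolding E_eq by (intro tfun_intros ta tb th)
  have tDf: "tfun (\<lambda>z. - Dir c f z)" and tDh: "tfun (Dir c h)"
    using tf th by (simp_all add: tfun_uminus tfun_Dir)
  have mDf: "tint (\<lambda>z. - Dir c f z) = 0" and mDh: "tint (Dir c h) = 0"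
    using tint_Dir_zero[OF tf] tint_Dir_zero[OF th] by (simp_all add: tint_uminus)
  have "omega \<alpha> (lie_bracket (\<lambda>z. c) (ham f)) (ham h) + omega \<alpha> (lie_bracket (ham f) (ham h)) (\<lambda>z. c)
      + omega \<alpha> (lie_bracket (ham h) (\<lambda>z. c)) (ham f) = 0"
    using coc const_in_Xsigma ham_in_Xsigma[OF tf] ham_in_Xsigma[OF th] unfolding is_2cocycle_def by blast
  moreover have "omega \<alpha> (lie_bracket (ham h) (\<lambda>z. c)) (ham f) = - omega \<alpha> (ham f) (ham (Dir c h))"
    using coc ham_in_Xsigma[OF tDh] ham_in_Xsigma[OF tf]
    unfolding lie_bracket_ham_const[OF th] is_2cocycle_def by blast
  ultimately have "tint (\<lambda>z. - Dir c f z * E h z) - tint (\<lambda>z. f z * E (Dir c h) z) = 0"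
    unfolding lie_bracket_const_ham[OF tf] omega_const_right
      omega_ham_right[OF th mh] omega_ham_right[OF tDh mDh]
      ham_part_ham[OF tDf mDf] ham_part_ham[OF tf mf] E_def by simp
  moreover have "tint (\<lambda>z. - Dir c f z * E h z) = tint (\<lambda>z. f z * Dir c (E h) z)"
    using tint_Dir_mult[OF tf tE] tint_uminus[of "\<lambda>z. Dir c f z * E h z"] by simp
  ultimately have cocycle: "tint (\<lambda>z. f z * Dir c (E h) z) - tint (\<lambda>z. f z * E (Dir c h) z) = 0"
    by simp
  have pointwise: "Dir c (E h) z - E (Dir c h) z = Dir c a z * Dy h z - Dir c b z * Dx h z" for z
    unfolding E_eq by (rule Dir_pairing_ham_commutator[OF sa sb sh])
  have tE': "tfun (E (Dir c h))" unfolding E_eq by (intro tfun_intros ta tb th)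
  have "tint (\<lambda>z. f z * (Dir c a z * Dy h z - Dir c b z * Dx h z)) =
      tint (\<lambda>z. f z * Dir c (E h) z - f z * E (Dir c h) z)"
    by (simp add: pointwise[symmetric] right_diff_distrib)
  also have "\<dots> = tint (\<lambda>z. f z * Dir c (E h) z) - tint (\<lambda>z. f z * E (Dir c h) z)"
    by (rule tint_diff) (intro smooth_mult smooth_Dir tfun_smooth tf tE tE')+
  also have "\<dots> = 0" by (rule cocycle)
  finally show ?thesis unfolding a_def b_def .
qed

lemma const_if_orthogonal_to_mean_zero:
  assumes K: "tfun K" and orth: "\<And>f. tfun f \<Longrightarrow> tint f = 0 \<Longrightarrow> tint (\<lambda>z. f z * K z) = 0"
  shows "K z = tint K"
proof -
  define f where "f z = K z - tint K" for z
  have tf: "tfun f" unfolding f_def by (intro tfun_diff K tfun_const)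
  have sf: "smooth f" and sK: "smooth K" using tf K tfun_smooth by blast+
  have mf: "tint f = 0" unfolding f_def using tint_diff[OF sK smooth_const] by simp
  have "tint (\<lambda>z. f z * f z) = tint (\<lambda>z. f z * K z - tint K * f z)"
    unfolding f_def by (simp add: algebra_simps)
  also have "\<dots> = tint (\<lambda>z. f z * K z) - tint K * tint f"
    by (simp add: tint_diff tint_cmult smooth_mult smooth_cmult sf sK)
  also have "\<dots> = 0" using orth[OF tf mf] mf by simp
  finally have "f z = 0" by (rule tint_square_eq_zero_imp_zero[OF tf])
  then show ?thesis unfolding f_def by simp
qed

lemma zero_if_mult_sin_cos_zero:
  fixes g t :: real
  assumes "g * sin t = 0" "g * cos t = 0"
  shows "g = 0"
proof -
  have "g = g * ((sin t)\<^sup>2 + (cos t)\<^sup>2)" by simp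
  also have "\<dots> = (g * sin t) * sin t + (g * cos t) * cos t"
    by (simp only: power2_eq_square distrib_left mult.assoc)
  finally show ?thesis using assms by simp
qed

text \<open>Pairing the Fourier mode \<open>H\<^sub>h\<close>, \<open>h = sin (2\<pi> k \<bullet> z + p)\<close>, against all Hamiltonian
  fields shows that \<open>cos (2\<pi> k \<bullet> z + p) (k\<^sub>2 L\<^sub>c a - k\<^sub>1 L\<^sub>c b)\<close>, where \<open>\<alpha> = a dx + b dy\<close>, is
  constant; choosing \<open>p\<close> and the evaluation point so that the cosine vanishes shows that the
  constant is zero.\<close>

lemma cocycle_imp_Dir_alpha_mode_zero:
  assumes cf: "closed_form \<alpha>" and coc: "is_2cocycle (omega \<alpha>)"
    and k: "fst k \<in> \<int>" "snd k \<in> \<int>" "k \<noteq> 0"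
  shows "snd k * Dir c (\<lambda>w. fst (\<alpha> w)) z - fst k * Dir c (\<lambda>w. snd (\<alpha> w)) z = 0"
proof -
  define g where "g z = snd k * Dir c (\<lambda>w. fst (\<alpha> w)) z - fst k * Dir c (\<lambda>w. snd (\<alpha> w)) z" for z
  define \<theta> where "\<theta> z = 2 * pi * (k \<bullet> z)" for z
  have tg: "tfun g" unfolding g_def using closed_form_components[OF cf] by (intro tfun_intros)
  have const: "cos (\<theta> z + p) * g z = cos (\<theta> w + p) * g w" for z w p
  proof -
    define K where "K z = Dir c (\<lambda>w. fst (\<alpha> w)) z * Dy (wave k p) z - Dir c (\<lambda>w. snd (\<alpha> w)) z * Dx (wave k p) z" for z
    have K_eq: "K z = 2 * pi * (cos (\<theta> z + p) * g z)" for z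
      unfolding K_def g_def \<theta>_def Dx_def Dy_def Dir_wave by (simp add: inner_pt algebra_simps)
    have "tfun K" unfolding K_def using closed_form_components[OF cf] tfun_wave[OF k(1,2)]
      by (intro tfun_intros)
    then have "K z = tint K" "K w = tint K"
      using const_if_orthogonal_to_mean_zero cocycle_Dir_alpha_orthogonal[OF cf coc _ _
          tfun_wave[OF k(1,2)] tint_wave[OF k]] unfolding K_def by blast+
    then have "K z = K w" by simp
    then show ?thesis unfolding K_eq by simp
  qed
  define z0 where "z0 = (1 / (4 * (k \<bullet> k))) *\<^sub>R k"
  have \<theta>0: "\<theta> 0 = 0" and \<theta>z0: "\<theta> z0 = pi / 2"
    using k(3) unfolding \<theta>_def z0_def by simp_all
  have "cos (\<theta> z + - pi / 2) * g z = cos (\<theta> 0 + - pi / 2) * g 0"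
    and "cos (\<theta> z + 0) * g z = cos (\<theta> z0 + 0) * g z0" by (rule const)+
  then have "cos (\<theta> z - pi / 2) * g z = 0" and "cos (\<theta> z) * g z = 0"
    unfolding \<theta>0 \<theta>z0 by simp_all
  then have "g z * sin (\<theta> z) = 0" "g z * cos (\<theta> z) = 0" by (simp_all add: cos_diff mult.commute)
  then show ?thesis using zero_if_mult_sin_cos_zero unfolding g_def by blast
qed

theorem cocycle_imp_closed_form_const:
  assumes cf: "closed_form \<alpha>" and coc: "is_2cocycle (omega \<alpha>)"
  shows "\<alpha> z = (tint (\<lambda>w. fst (\<alpha> w)), tint (\<lambda>w. snd (\<alpha> w)))"
proof -
  have "Dir c (\<lambda>w. snd (\<alpha> w)) z = 0" "Dir c (\<lambda>w. fst (\<alpha> w)) z = 0" for c z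
    using cocycle_imp_Dir_alpha_mode_zero[OF cf coc, of "(1,0)"]
      cocycle_imp_Dir_alpha_mode_zero[OF cf coc, of "(0,1)"] by (simp_all add: zero_prod_def)
  then have "fst (\<alpha> z) = tint (\<lambda>w. fst (\<alpha> w))" "snd (\<alpha> z) = tint (\<lambda>w. snd (\<alpha> w))"
    using tfun_eq_tint_if_Dx_Dy_zero closed_form_components[OF cf] unfolding Dx_def Dy_def by blast+
  then show ?thesis by (simp add: prod_eq_iff)
qed

lemma omega_eq_l2_psi:
  assumes cf: "closed_form \<alpha>" and coc: "is_2cocycle (omega \<alpha>)" and U: "U \<in> Xsigma" and V: "V \<in> Xsigma"
  shows "omega \<alpha> U V = l2 (\<lambda>z. psi U z *\<^sub>R sharp \<alpha> z) V"
proof -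
  obtain f where tf: "tfun f" and mf: "tint f = 0" and Uf: "\<And>z. U z = vf_mean U + ham f z"
    using Xsigma_eq_mean_plus_ham[OF U] by blast
  obtain h where th: "tfun h" and mh: "tint h = 0" and Vh: "\<And>z. V z = vf_mean V + ham h z"
    using Xsigma_eq_mean_plus_ham[OF V] by blast
  define a0 b0 where "a0 = tint (\<lambda>w. fst (\<alpha> w))" and "b0 = tint (\<lambda>w. snd (\<alpha> w))"
  have \<alpha>: "\<alpha> z = (a0, b0)" for z unfolding a0_def b0_def by (rule cocycle_imp_closed_form_const[OF cf coc])
  define m where "m = a0 * fst (vf_mean V) + b0 * snd (vf_mean V)"
  have sf: "smooth f" and sh: "smooth h" using tf th tfun_smooth by blast+
  \<comment> \<open>\<open>\<alpha>\<close> is constant, so the mean of \<open>V\<close> contributes the constant \<open>m\<close>, orthogonal to \<open>f\<close>\<close>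
  have "omega \<alpha> U V = tint (\<lambda>z. f z * (a0 * Dy h z - b0 * Dx h z))"
    unfolding omega_def ham_part_eqI[OF tf mf Uf] ham_part_eqI[OF th mh Vh] eval1_def \<alpha>
    by (simp add: ham_def algebra_simps)
  also have "\<dots> = m * tint f + tint (\<lambda>z. f z * (a0 * Dy h z - b0 * Dx h z))"
    using mf by simp
  also have "\<dots> = tint (\<lambda>z. m * f z + f z * (a0 * Dy h z - b0 * Dx h z))"
    using tint_add[OF smooth_cmult[OF sf], of "\<lambda>z. f z * (a0 * Dy h z - b0 * Dx h z)" m]
    by (simp add: tint_cmult smooth_mult smooth_diff smooth_cmult smooth_Dx smooth_Dy sf sh)
  also have "\<dots> = l2 (\<lambda>z. psi U z *\<^sub>R sharp \<alpha> z) V"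
  proof -
    have "(psi U z *\<^sub>R sharp \<alpha> z) \<bullet> V z = m * f z + f z * (a0 * Dy h z - b0 * Dx h z)" for z
      unfolding psi_eqI[OF tf mf Uf] sharp_def \<alpha> inner_pt Vh[of z] m_def
      by (simp add: ham_def algebra_simps)
    then show ?thesis unfolding l2_def by simp
  qed
  finally show ?thesis .
qed

text \<open>\<open>X\<close> is the \<open>Xsigma\<close>-component of \<open>ad(1,U)\<^sup>T(1,U)\<close> in the central extension, characterised
  by duality against \<open>Xsigma\<close>.\<close>

definition ad_transpose_Xsigma :: "(pt \<Rightarrow> pt) \<Rightarrow> (pt \<Rightarrow> pt) \<Rightarrow> (pt \<Rightarrow> pt) \<Rightarrow> bool" where
  "ad_transpose_Xsigma \<alpha> U X \<longleftrightarrow>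
     X \<in> Xsigma \<and> (\<forall>V\<in>Xsigma. l2 X V = omega \<alpha> U V + l2 U (lie_bracket U V))"

lemma ad_transpose_app_iff:
  "(\<exists>z. ad_transpose_app \<alpha> (1, U) z \<and> (0, Z) = ext_neg z) \<longleftrightarrow>
   ad_transpose_Xsigma \<alpha> U (\<lambda>w. - Z w)"
proof
  assume "\<exists>z. ad_transpose_app \<alpha> (1, U) z \<and> (0, Z) = ext_neg z"
  then obtain z where ad: "ad_transpose_app \<alpha> (1, U) z" and "(0, Z) = ext_neg z" by blast
  then have z: "z = (0, \<lambda>w. - Z w)" unfolding ext_neg_def by (cases z) (auto simp: fun_eq_iff)
  show "ad_transpose_Xsigma \<alpha> U (\<lambda>w. - Z w)"
    using ad unfolding ad_transpose_Xsigma_def ad_transpose_app_def z ext_alg_def ext_inner_def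
      ext_bracket_def l2_def by auto
next
  assume "ad_transpose_Xsigma \<alpha> U (\<lambda>w. - Z w)"
  then have "ad_transpose_app \<alpha> (1, U) (0, \<lambda>w. - Z w)"
    unfolding ad_transpose_Xsigma_def ad_transpose_app_def ext_alg_def ext_inner_def
      ext_bracket_def l2_def by auto
  moreover have "(0, Z) = ext_neg (0, \<lambda>w. - Z w)" unfolding ext_neg_def by simp
  ultimately show "\<exists>z. ad_transpose_app \<alpha> (1, U) z \<and> (0, Z) = ext_neg z" by blast
qed

theorem ad_transpose_Xsigma_iff:
  assumes cf: "closed_form \<alpha>" and coc: "is_2cocycle (omega \<alpha>)" and U: "U \<in> Xsigma"
    and div: "\<And>z. divg Z z = 0"
  shows "ad_transpose_Xsigma \<alpha> U (\<lambda>w. - Z w) \<longleftrightarrow>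
         (\<exists>p. tfun p \<and> (\<forall>z. Z z = - nabla U U z - psi U z *\<^sub>R sharp \<alpha> z - grad p z))"
proof -
  define N P where "N = nabla U U" and "P = (\<lambda>z. psi U z *\<^sub>R sharp \<alpha> z)"
  have vN: "vf N" unfolding N_def by (rule vf_nabla[OF vf_Xsigma[OF U]])
  have vP: "vf P" unfolding P_def sharp_def
    using vf_scaleR[OF tfun_psi[OF U]] cf unfolding closed_form_def by blast
  have l2_rhs: "omega \<alpha> U V + l2 U (lie_bracket U V) = l2 N V + l2 P V" if "V \<in> Xsigma" for V
    using l2_lie_bracket[OF U that] omega_eq_l2_psi[OF cf coc U that] unfolding N_def P_def by simp
  show ?thesis
  proof
    assume ad: "ad_transpose_Xsigma \<alpha> U (\<lambda>w. - Z w)"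
    then have vZ: "vf (\<lambda>w. - Z w)" unfolding ad_transpose_Xsigma_def using vf_Xsigma by blast
    define W where "W z = - Z z - N z - P z" for z
    have vW: "vf W" unfolding W_def by (intro vf_diff vZ vN vP)
    have "l2 W V = 0" if V: "V \<in> Xsigma" for V
    proof -
      have "l2 W V = l2 (\<lambda>w. - Z w) V - l2 N V - l2 P V"
        unfolding W_def l2_diff_left[OF vf_diff[OF vZ vN] vP vf_Xsigma[OF V]]
          l2_diff_left[OF vZ vN vf_Xsigma[OF V]] ..
      also have "\<dots> = 0"
        using ad V l2_rhs[OF V] unfolding ad_transpose_Xsigma_def by simp
      finally show ?thesis .
    qed
    then obtain p where "tfun p" and "\<And>z. W z = grad p z"
      using orthogonal_Xsigma_imp_grad[OF vW] by blast
    moreover have "Z z = - N z - P z - W z" for z unfolding W_def by (simp add: algebra_simps)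
    ultimately show "\<exists>p. tfun p \<and> (\<forall>z. Z z = - nabla U U z - psi U z *\<^sub>R sharp \<alpha> z - grad p z)"
      unfolding N_def P_def by metis
  next
    assume "\<exists>p. tfun p \<and> (\<forall>z. Z z = - nabla U U z - psi U z *\<^sub>R sharp \<alpha> z - grad p z)"
    then obtain p where tp: "tfun p" and "\<And>z. Z z = - N z - P z - grad p z"
      unfolding N_def P_def by blast
    then have Z: "(\<lambda>w. - Z w) = (\<lambda>w. (N w + P w) + grad p w)" by fastforce
    have vNP: "vf (\<lambda>z. N z + P z)" by (intro vf_add vN vP)
    have vZ: "vf (\<lambda>w. - Z w)" unfolding Z by (intro vf_add vNP vf_grad tp)
    have "divg (\<lambda>w. - Z w) z = 0" for z
      using div[of z] vf_uminus[OF vZ] unfolding divg_def vf_def by (simp add: Dx_uminus Dy_uminus tfun_smooth)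
    with vZ have "(\<lambda>w. - Z w) \<in> Xsigma" unfolding Xsigma_def by blast
    moreover have "l2 (\<lambda>w. - Z w) V = omega \<alpha> U V + l2 U (lie_bracket U V)" if V: "V \<in> Xsigma" for V
      unfolding Z l2_rhs[OF V] l2_add_left[OF vNP vf_grad[OF tp] vf_Xsigma[OF V]]
        l2_add_left[OF vN vP vf_Xsigma[OF V]] l2_grad_Xsigma[OF V tp] by simp
    ultimately show "ad_transpose_Xsigma \<alpha> U (\<lambda>w. - Z w)" unfolding ad_transpose_Xsigma_def by blast
  qed
qed

lemma Dir_slice:
  assumes "G differentiable (at (t, z))"
  shows "Dir v (\<lambda>w. G (t, w)) z = Dir (0, v) G (t, z)"
proof -
  have "((\<lambda>w. (t, w)) has_derivative (\<lambda>v. (0, v))) (at z)"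
    by (auto intro!: derivative_eq_intros)
  from Dir_eq[OF has_derivative_compose[OF this has_derivative_Dir[OF assms]]] show ?thesis by simp
qed

lemma deriv_slice:
  assumes "\<And>q. G differentiable (at q)"
  shows "deriv (\<lambda>s. G (s, z)) t = Dir (1, 0) G (t, z)"
proof -
  have "((\<lambda>s. G ((0, z) + s *\<^sub>R (1, 0))) has_real_derivative Dir (1, 0) G ((0, z) + t *\<^sub>R (1, 0)))
        (at t within UNIV)"
    by (rule has_real_derivative_line[OF assms])
  then show ?thesis by (simp add: DERIV_imp_deriv)
qed

text \<open>Time and space derivatives commute, so the velocity of a curve in \<open>Xsigma\<close> is divergence free.\<close>

lemma divg_dt_zero:
  assumes "smooth_curve u"
  shows "divg (dt u t) z = 0"
proof -
  define F1 where "F1 = (\<lambda>(t, z). fst (u t z))"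
  define F2 where "F2 = (\<lambda>(t, z). snd (u t z))"
  have s1: "smooth F1" and s2: "smooth F2" using assms unfolding smooth_curve_def F1_def F2_def by auto
  have d: "\<And>q. F differentiable (at q)" if "smooth F" for F :: "real \<times> pt \<Rightarrow> real"
    using smooth_imp_differentiable[OF that] .
  have div_slice: "Dir (0, (1, 0)) F1 (s, w) + Dir (0, (0, 1)) F2 (s, w) = 0" for s w
    using Xsigma_components(3)[of "u s" w] assms Dir_slice[OF d[OF s1]] Dir_slice[OF d[OF s2]]
    unfolding smooth_curve_def Dx_def Dy_def F1_def F2_def by simp
  have "divg (dt u t) z = Dir (0, (1, 0)) (Dir (1, 0) F1) (t, z) + Dir (0, (0, 1)) (Dir (1, 0) F2) (t, z)"
    unfolding divg_def dt_def Dx_def Dy_def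
    using deriv_slice[OF d[OF s1]] deriv_slice[OF d[OF s2]]
      Dir_slice[OF d[OF smooth_Dir[OF s1]]] Dir_slice[OF d[OF smooth_Dir[OF s2]]]
    by (simp add: F1_def F2_def)
  also have "\<dots> = Dir (1, 0) (\<lambda>q. Dir (0, (1, 0)) F1 q + Dir (0, (0, 1)) F2 q) (t, z)"
    using s1 s2 by (simp add: Dir_Dir_commute Dir_add d smooth_Dir)
  also have "(\<lambda>q. Dir (0, (1, 0)) F1 q + Dir (0, (0, 1)) F2 q) = (\<lambda>q. 0)"
    using div_slice by auto
  finally show ?thesis by (simp add: Dir_const)
qed

lemma euler_eq_iff_ad_transpose_Xsigma:
  "euler_eq \<alpha> (\<lambda>t. 1) u \<longleftrightarrow> (\<forall>t. ad_transpose_Xsigma \<alpha> (u t) (\<lambda>w. - dt u t w))"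
  unfolding euler_eq_def ad_transpose_app_iff[symmetric] by simp

theorem proposition15p1:
  fixes \<alpha> :: "pt \<Rightarrow> pt" and u :: "real \<Rightarrow> pt \<Rightarrow> pt"
  assumes "closed_form \<alpha>"
    and "is_2cocycle (omega \<alpha>)"
    and "smooth_curve u"
  shows "euler_eq \<alpha> (\<lambda>t. 1) u \<longleftrightarrow>
         (\<exists>p :: real \<Rightarrow> pt \<Rightarrow> real. (\<forall>t. tfun (p t)) \<and>
            (\<forall>t z. dt u t z = - nabla (u t) (u t) z - psi (u t) z *\<^sub>R sharp \<alpha> z - grad (p t) z))"
proof -
  have "u t \<in> Xsigma" for t using assms(3) unfolding smooth_curve_def by blast
  then have "ad_transpose_Xsigma \<alpha> (u t) (\<lambda>w. - dt u t w) \<longleftrightarrow>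
      (\<exists>p. tfun p \<and> (\<forall>z. dt u t z = - nabla (u t) (u t) z - psi (u t) z *\<^sub>R sharp \<alpha> z - grad p z))"
    for t by (rule ad_transpose_Xsigma_iff[OF assms(1,2) _ divg_dt_zero[OF assms(3)]])
  then show ?thesis
    unfolding euler_eq_iff_ad_transpose_Xsigma by (simp add: choice_iff all_conj_distrib)
qed

end
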